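(* Suppose the third-order ODE $u'''=f(x,u,u',u'')$ (with $I_3\ne0$) is equivalent to $\bar u'''=\bar a^3(\bar x)\bar u$ under a contact transformation $\bar x=\varphi(x,u,p)$, $\bar u=\psi(x,u,p)$, $\bar p=\chi(x,u,p)$ with nonzero Jacobian. Set $H(x,u,p)=\bar a'(\varphi)/\bar a(\varphi)^2$ and $b(x,u,p)=\bar a(\varphi)$. Then: (1) $H$ satisfies $-\frac{2}{J_3}\hat D_xH+H^2=K$; (2) $b$ satisfies $\hat D_xb=-J_3Hb$; (3) there is a nonzero function $a_1(x,u,p)$ satisfying $\hat D_xa_1=J_3(H+I_5)a_1$, $a_{1_u}=(HI_7-Q)a_1$, $a_{1_p}=\big(I_4(H+I_5)-\tfrac{I_7}{J_3}\big)a_1$, $a_{1_q}=0$; (4) $\varphi$ satisfies $\hat D_x\varphi=-\tfrac{J_3}{b}$, $\varphi_u=-\tfrac{I_7}{b}$, $\varphi_p=-\tfrac{I_4}{b}$; (5) with $\eta=\hat D_x\chi/\hat D_x\varphi$ (a function of $(x,u,p,q)$) and $\bar f=\bar a^3(\varphi)\psi$, the functions $\eta,\chi,\psi$ satisfy $\hat D_x\eta=-\tfrac{J_3}{b}\bar f$, $\eta_u=\big(\tfrac{(H+I_5)^2}{2}+\tfrac{I_2}{2J_3^2}\big)b^2a_1-\tfrac{I_7}{b}\bar f$, $\eta_p=\big(\tfrac{H+I_5}{J_3}+\tfrac{I_1}{3J_3^2}\big)b^2a_1-\tfrac{I_4}{b}\bar f$, $\eta_q=\tfrac{b^2a_1}{J_3^2}$;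 $\hat D_x\chi=-\tfrac{J_3}{b}\eta$, $\chi_u=-(H+I_5)ba_1-\tfrac{I_7}{b}\eta$, $\chi_p=-\tfrac{ba_1}{J_3}-\tfrac{I_4}{b}\eta$; $I_7\hat D_x\psi=J_3(\psi_u-a_1)$, $\psi_x=\chi\varphi_x-pa_1$, $\psi_p=-\tfrac{I_4}{b}\chi$; where also $\chi=\hat D_x\psi/\hat D_x\varphi$. Consequently the transformation can be constructed by successively solving these systems for $H,b,a_1,\varphi,\eta,\chi,\psi$.
   Context: Coordinates $(x,u,p,q)$ with $p=u'$, $q=u''$; subscripts denote partial derivatives; $\hat D_x=\partial_x+p\partial_u+q\partial_p+f\partial_q$. A contact transformation is a local diffeomorphism $\bar x=\varphi(x,u,p)$, $\bar u=\psi(x,u,p)$, $\bar p=\chi(x,u,p)$ with $d\bar u-\bar p\,d\bar x=\lambda(du-p\,dx)$ for some $\lambda(x,u,p)$. Define $I_1=-f_q$, $I_2=-\tfrac29I_1^2-f_p-\tfrac13\hat D_xI_1$, $I_3=-\tfrac13I_1I_2-f_u-\tfrac12\hat D_xI_2$, $J_3=I_3^{1/3}$ (real cube root), $I_4=J_{3_q}$, $I_5=\frac{1}{3J_3^2}(I_1J_3+3\hat D_xJ_3)$, $I_7=-I_{5_q}J_3^2$, $I_9=2J_3\hat D_xI_5-I_2+J_3^2I_5^2$, $K=I_9/J_3^2$, and $Q=-\frac{I_1I_7+3J_3^2I_{5_p}+3J_{3_u}-3J_3I_4\hat D_xI_5}{3J_3}$. *)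

theory Defs
  imports "HOL-Analysis.Analysis"
begin

type_synonym R3 = "real \<times> real \<times> real"
type_synonym R4 = "real \<times> real \<times> real \<times> real"

text \<open>C-infinity smoothness on a set U (meant to be open): differentiable at every point
  of U, and every first partial derivative (Frechet derivative applied to a basis vector)
  is again smooth on U.\<close>
coinductive smooth_on :: "'a::euclidean_space set \<Rightarrow> ('a \<Rightarrow> real) \<Rightarrow> bool" where
  "(\<forall>z\<in>U. g differentiable (at z)) \<Longrightarrow>
   (\<forall>i\<in>Basis. smooth_on U (\<lambda>z. frechet_derivative g (at z) i)) \<Longrightarrow> smooth_on U g"

definition px4 :: "(R4 \<Rightarrow> real) \<Rightarrow> R4 \<Rightarrow> real" where
  "px4 g = (\<lambda>(x,u,p,q). deriv (\<lambda>t. g (t,u,p,q)) x)"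
definition pu4 :: "(R4 \<Rightarrow> real) \<Rightarrow> R4 \<Rightarrow> real" where
  "pu4 g = (\<lambda>(x,u,p,q). deriv (\<lambda>t. g (x,t,p,q)) u)"
definition pp4 :: "(R4 \<Rightarrow> real) \<Rightarrow> R4 \<Rightarrow> real" where
  "pp4 g = (\<lambda>(x,u,p,q). deriv (\<lambda>t. g (x,u,t,q)) p)"
definition pq4 :: "(R4 \<Rightarrow> real) \<Rightarrow> R4 \<Rightarrow> real" where
  "pq4 g = (\<lambda>(x,u,p,q). deriv (\<lambda>t. g (x,u,p,t)) q)"

definition px3 :: "(R3 \<Rightarrow> real) \<Rightarrow> R3 \<Rightarrow> real" where
  "px3 g = (\<lambda>(x,u,p). deriv (\<lambda>t. g (t,u,p)) x)"
definition pu3 :: "(R3 \<Rightarrow> real) \<Rightarrow> R3 \<Rightarrow> real" where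
  "pu3 g = (\<lambda>(x,u,p). deriv (\<lambda>t. g (x,t,p)) u)"
definition pp3 :: "(R3 \<Rightarrow> real) \<Rightarrow> R3 \<Rightarrow> real" where
  "pp3 g = (\<lambda>(x,u,p). deriv (\<lambda>t. g (x,u,t)) p)"

definition lift3 :: "(R3 \<Rightarrow> real) \<Rightarrow> R4 \<Rightarrow> real" where
  "lift3 h = (\<lambda>(x,u,p,q). h (x,u,p))"

text \<open>Total derivative along u''' = f(x,u,p,q).\<close>
definition Dhat :: "(R4 \<Rightarrow> real) \<Rightarrow> (R4 \<Rightarrow> real) \<Rightarrow> R4 \<Rightarrow> real" where
  "Dhat f g = (\<lambda>(x,u,p,q). px4 g (x,u,p,q) + p * pu4 g (x,u,p,q) + q * pp4 g (x,u,p,q)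
                            + f (x,u,p,q) * pq4 g (x,u,p,q))"

definition I1 :: "(R4 \<Rightarrow> real) \<Rightarrow> R4 \<Rightarrow> real" where
  "I1 f = (\<lambda>z. - pq4 f z)"
definition I2 :: "(R4 \<Rightarrow> real) \<Rightarrow> R4 \<Rightarrow> real" where
  "I2 f = (\<lambda>z. - (2/9) * (I1 f z)^2 - pp4 f z - (1/3) * Dhat f (I1 f) z)"
definition I3 :: "(R4 \<Rightarrow> real) \<Rightarrow> R4 \<Rightarrow> real" where
  "I3 f = (\<lambda>z. - (1/3) * I1 f z * I2 f z - pu4 f z - (1/2) * Dhat f (I2 f) z)"
definition J3 :: "(R4 \<Rightarrow> real) \<Rightarrow> R4 \<Rightarrow> real" where
  "J3 f = (\<lambda>z. root 3 (I3 f z))"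
definition I4 :: "(R4 \<Rightarrow> real) \<Rightarrow> R4 \<Rightarrow> real" where
  "I4 f = pq4 (J3 f)"
definition I5 :: "(R4 \<Rightarrow> real) \<Rightarrow> R4 \<Rightarrow> real" where
  "I5 f = (\<lambda>z. (I1 f z * J3 f z + 3 * Dhat f (J3 f) z) / (3 * (J3 f z)^2))"
definition I7 :: "(R4 \<Rightarrow> real) \<Rightarrow> R4 \<Rightarrow> real" where
  "I7 f = (\<lambda>z. - pq4 (I5 f) z * (J3 f z)^2)"
definition I9 :: "(R4 \<Rightarrow> real) \<Rightarrow> R4 \<Rightarrow> real" where
  "I9 f = (\<lambda>z. 2 * J3 f z * Dhat f (I5 f) z - I2 f z + (J3 f z)^2 * (I5 f z)^2)"
definition Kinv :: "(R4 \<Rightarrow> real) \<Rightarrow> R4 \<Rightarrow> real" where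
  "Kinv f = (\<lambda>z. I9 f z / (J3 f z)^2)"
definition Qinv :: "(R4 \<Rightarrow> real) \<Rightarrow> R4 \<Rightarrow> real" where
  "Qinv f = (\<lambda>z. - (I1 f z * I7 f z + 3 * (J3 f z)^2 * pp4 (I5 f) z + 3 * pu4 (J3 f) z
                    - 3 * J3 f z * I4 f z * Dhat f (I5 f) z) / (3 * J3 f z))"

text \<open>Contact transformation on an open set V of (x,u,p)-space: smooth, nonzero Jacobian
  (hence a local diffeomorphism), and d psi - chi d phi = lambda (du - p dx).\<close>
definition contact_transformation :: "R3 set \<Rightarrow> (R3 \<Rightarrow> real) \<Rightarrow> (R3 \<Rightarrow> real) \<Rightarrow> (R3 \<Rightarrow> real) \<Rightarrow> bool" where
  "contact_transformation V phi psi chi \<longleftrightarrow>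
     open V \<and> smooth_on V phi \<and> smooth_on V psi \<and> smooth_on V chi \<and>
     (\<forall>z\<in>V.
        px3 phi z * (pu3 psi z * pp3 chi z - pp3 psi z * pu3 chi z)
      - pu3 phi z * (px3 psi z * pp3 chi z - pp3 psi z * px3 chi z)
      + pp3 phi z * (px3 psi z * pu3 chi z - pu3 psi z * px3 chi z) \<noteq> 0) \<and>
     (\<exists>lam :: R3 \<Rightarrow> real. \<forall>x u p. (x,u,p) \<in> V \<longrightarrow>
        px3 psi (x,u,p) - chi (x,u,p) * px3 phi (x,u,p) = - p * lam (x,u,p) \<and>
        pu3 psi (x,u,p) - chi (x,u,p) * pu3 phi (x,u,p) = lam (x,u,p) \<and>
        pp3 psi (x,u,p) - chi (x,u,p) * pp3 phi (x,u,p) = 0)"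

text \<open>The prolonged contact transformation maps u''' = f(x,u,u',u'') (on the open set W of
  (x,u,p,q)-space) to ubar''' = abar(xbar)^3 ubar: with pbar = chi, qbar = eta = Dhat chi / Dhat phi,
  one has rbar = Dhat eta / Dhat phi = abar(phi)^3 psi on W.\<close>
definition equivalent_to_linear ::
  "(R4 \<Rightarrow> real) \<Rightarrow> R4 set \<Rightarrow> (R3 \<Rightarrow> real) \<Rightarrow> (R3 \<Rightarrow> real) \<Rightarrow> (R3 \<Rightarrow> real) \<Rightarrow> (real \<Rightarrow> real) \<Rightarrow> bool" where
  "equivalent_to_linear f W phi psi chi abar \<longleftrightarrow>
     (\<forall>z\<in>W. Dhat f (lift3 phi) z \<noteq> 0) \<and>
     (let eta = (\<lambda>z. Dhat f (lift3 chi) z / Dhat f (lift3 phi) z) in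
      \<forall>z\<in>W. Dhat f eta z / Dhat f (lift3 phi) z = (abar (lift3 phi z))^3 * lift3 psi z)"

end

theory Submission
  imports Defs
begin

(* The contact condition d psi - chi d phi = a1 (du - p dx) defines the factor a1, which is
   nonzero because the Jacobian is. Lifted to (x,u,p,q), the linearization condition reads
   Dhat eta = b^3 psi Dhat phi with eta = Dhat chi / Dhat phi. Differentiating it with respect
   to q, p and u and commuting the partial derivatives past Dhat expresses f_q, f_p and f_u
   through phi, a1, b and their total derivatives. Substituted into the invariants this gives
   I3 = -(b Dhat phi)^3, so J3 = -b Dhat phi, and then I4, I5, I7, K and Q in closed form;
   each of (1)-(5) is then a rational identity between these expressions. *)

section \<open>Smooth functions\<close>

lemma smooth_on_imp_differentiable: "smooth_on U g \<Longrightarrow> z \<in> U \<Longrightarrow> g differentiable (at z)"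
  by (erule smooth_on.cases) auto

lemma smooth_on_frechet_derivative:
  "smooth_on U g \<Longrightarrow> i \<in> Basis \<Longrightarrow> smooth_on U (\<lambda>z. frechet_derivative g (at z) i)"
  by (erule smooth_on.cases) auto

lemmas has_derivative_frechet_derivative = frechet_derivative_works[THEN iffD1]

lemma frechet_derivative_apply: "(g has_derivative g') (at z) \<Longrightarrow> frechet_derivative g (at z) i = g' i"
  by (metis frechet_derivative_at)

lemma smooth_on_coinduct_upto:
  fixes U :: "'a::euclidean_space set"
  assumes U: "open U" and "P g"
    and step: "\<And>g. P g \<Longrightarrow> (\<forall>z\<in>U. g differentiable (at z)) \<and>
      (\<forall>i\<in>Basis. \<exists>h. (P h \<or> smooth_on U h) \<and> (\<forall>z\<in>U. frechet_derivative g (at z) i = h z))"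
  shows "smooth_on U g"
proof -
  have "\<exists>h. (P h \<or> smooth_on U h) \<and> (\<forall>z\<in>U. g z = h z)" using \<open>P g\<close> by blast
  then show ?thesis
  proof (coinduction arbitrary: g rule: smooth_on.coinduct)
    case (smooth_on g)
    then obtain h where h: "P h \<or> smooth_on U h" "\<forall>z\<in>U. g z = h z" by blast
    have h_diff: "\<forall>z\<in>U. h differentiable (at z)"
      using h(1) step smooth_on_imp_differentiable by blast
    have g_h: "g differentiable (at z) \<and> frechet_derivative g (at z) = frechet_derivative h (at z)"
      if "z \<in> U" for z
    proof -
      have "(g has_derivative frechet_derivative h (at z)) (at z)"
        by (rule has_derivative_transform_within_open[OF has_derivative_frechet_derivative U that])
          (use h_diff h(2) that in auto)
      then show ?thesis by (metis differentiableI frechet_derivative_at)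
    qed
    have "\<exists>h'. (P h' \<or> smooth_on U h') \<and> (\<forall>z\<in>U. frechet_derivative h (at z) i = h' z)"
      if "i \<in> Basis" for i
    proof (cases "P h")
      case True
      then show ?thesis using step that by blast
    next
      case False
      then show ?thesis using h(1) smooth_on_frechet_derivative that by blast
    qed
    then show ?case using g_h by auto
  qed
qed

lemma smooth_on_cong:
  assumes U: "open U" and "smooth_on U g" and "\<forall>z\<in>U. g z = h z"
  shows "smooth_on U h"
proof (rule smooth_on_coinduct_upto[where P = "\<lambda>h. \<exists>g. smooth_on U g \<and> (\<forall>z\<in>U. g z = h z)"])
  fix h assume "\<exists>g. smooth_on U g \<and> (\<forall>z\<in>U. g z = h z)"
  then obtain g where g: "smooth_on U g" "\<forall>z\<in>U. g z = h z" by blast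
  have "h differentiable (at z) \<and> frechet_derivative h (at z) = frechet_derivative g (at z)"
    if "z \<in> U" for z
  proof -
    have "(h has_derivative frechet_derivative g (at z)) (at z)"
      by (rule has_derivative_transform_within_open[OF has_derivative_frechet_derivative U that])
        (use g smooth_on_imp_differentiable that in auto)
    then show ?thesis by (metis differentiableI frechet_derivative_at)
  qed
  then show "(\<forall>z\<in>U. h differentiable (at z)) \<and> (\<forall>i\<in>Basis. \<exists>h'.
      ((\<exists>g. smooth_on U g \<and> (\<forall>z\<in>U. g z = h' z)) \<or> smooth_on U h') \<and>
      (\<forall>z\<in>U. frechet_derivative h (at z) i = h' z))"
    using smooth_on_frechet_derivative[OF g(1)] by fastforce
qed (use assms in auto)

lemma smooth_on_const: "open U \<Longrightarrow> smooth_on U (\<lambda>_. c)"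
proof (rule smooth_on_coinduct_upto[where P = "\<lambda>h. \<exists>c. h = (\<lambda>_. c)"])
  fix g :: "'a \<Rightarrow> real" assume "\<exists>c. g = (\<lambda>_. c)"
  then show "(\<forall>z\<in>U. g differentiable (at z)) \<and> (\<forall>i\<in>Basis. \<exists>h.
      ((\<exists>c. h = (\<lambda>_. c)) \<or> smooth_on U h) \<and> (\<forall>z\<in>U. frechet_derivative g (at z) i = h z))"
    by auto
qed auto

lemma smooth_on_bounded_linear:
  fixes l :: "'a::euclidean_space \<Rightarrow> real"
  assumes "open U" "bounded_linear l"
  shows "smooth_on U l"
proof (rule smooth_on_coinduct_upto[where P = "\<lambda>h. bounded_linear h \<or> (\<exists>c. h = (\<lambda>_. c))"])
  fix g :: "'a \<Rightarrow> real" assume "bounded_linear g \<or> (\<exists>c. g = (\<lambda>_. c))"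
  then show "(\<forall>z\<in>U. g differentiable (at z)) \<and> (\<forall>i\<in>Basis. \<exists>h.
      ((bounded_linear h \<or> (\<exists>c. h = (\<lambda>_. c))) \<or> smooth_on U h) \<and>
      (\<forall>z\<in>U. frechet_derivative g (at z) i = h z))"
  proof
    assume "bounded_linear g"
    then have d: "(g has_derivative g) (at z)" for z by (rule bounded_linear_imp_has_derivative)
    show ?thesis
    proof (intro conjI ballI)
      show "g differentiable (at z)" for z using d by (rule differentiableI)
      show "\<exists>h. ((bounded_linear h \<or> (\<exists>c. h = (\<lambda>_. c))) \<or> smooth_on U h) \<and>
          (\<forall>z\<in>U. frechet_derivative g (at z) i = h z)" for i
        by (rule exI[of _ "\<lambda>_. g i"]) (auto simp: frechet_derivative_apply[OF d])
    qed
  qed auto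
qed (use assms in auto)

lemma frechet_derivative_real: "k differentiable (at t) \<Longrightarrow> frechet_derivative k (at t) = (\<lambda>x. deriv k t * x)"
  for k :: "real \<Rightarrow> real"
  by (metis DERIV_deriv_iff_real_differentiable frechet_derivative_at has_field_derivative_def)

lemma smooth_on_deriv:
  fixes k :: "real \<Rightarrow> real"
  assumes "open T" "smooth_on T k"
  shows "smooth_on T (deriv k)"
proof (rule smooth_on_cong[OF assms(1) smooth_on_frechet_derivative[OF assms(2), of 1]])
  show "\<forall>t\<in>T. frechet_derivative k (at t) 1 = deriv k t"
    using frechet_derivative_real smooth_on_imp_differentiable[OF assms(2)] by simp
qed simp

text \<open>Closed under partial derivatives, hence a coinduction invariant for \<^const>\<open>smooth_on\<close>.\<close>

inductive smooth_closure :: "'a::euclidean_space set \<Rightarrow> ('a \<Rightarrow> real) \<Rightarrow> bool" for U where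
  base: "smooth_on U g \<Longrightarrow> smooth_closure U g"
| add: "smooth_closure U g \<Longrightarrow> smooth_closure U h \<Longrightarrow> smooth_closure U (\<lambda>z. g z + h z)"
| mult: "smooth_closure U g \<Longrightarrow> smooth_closure U h \<Longrightarrow> smooth_closure U (\<lambda>z. g z * h z)"
| inverse: "smooth_closure U g \<Longrightarrow> \<forall>z\<in>U. g z \<noteq> 0 \<Longrightarrow> smooth_closure U (\<lambda>z. inverse (g z))"
| compose: "smooth_on T k \<Longrightarrow> open T \<Longrightarrow> smooth_closure U g \<Longrightarrow> \<forall>z\<in>U. g z \<in> T \<Longrightarrow>
    smooth_closure U (\<lambda>z. k (g z))"

lemma frechet_derivative_inverse_apply:
  fixes g :: "'a::real_normed_vector \<Rightarrow> real"
  assumes "g differentiable (at z)" "g z \<noteq> 0"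
  shows "frechet_derivative (\<lambda>z. inverse (g z)) (at z) i
    = inverse (g z) * inverse (g z) * (- 1 * frechet_derivative g (at z) i)"
proof -
  have "((\<lambda>z. inverse (g z)) has_derivative
      (\<lambda>x. - (inverse (g z) * frechet_derivative g (at z) x * inverse (g z)))) (at z)"
    using assms by (intro Deriv.has_derivative_inverse has_derivative_frechet_derivative) auto
  then show ?thesis by (simp add: frechet_derivative_apply)
qed

lemma frechet_derivative_compose_apply:
  fixes g :: "'a::real_normed_vector \<Rightarrow> real" and k :: "real \<Rightarrow> real"
  assumes "g differentiable (at z)" "k differentiable (at (g z))"
  shows "frechet_derivative (\<lambda>z. k (g z)) (at z) i = deriv k (g z) * frechet_derivative g (at z) i"
proof -
  have "((\<lambda>z. k (g z)) has_derivative
      (\<lambda>x. frechet_derivative k (at (g z)) (frechet_derivative g (at z) x))) (at z)"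
    using assms by (intro has_derivative_compose[OF has_derivative_frechet_derivative
          has_derivative_frechet_derivative])
  then show ?thesis using assms(2) by (simp add: frechet_derivative_apply frechet_derivative_real)
qed

lemma smooth_closure_differentiable: "smooth_closure U g \<Longrightarrow> z \<in> U \<Longrightarrow> g differentiable (at z)"
proof (induction rule: smooth_closure.induct)
  case (base g)
  then show ?case by (rule smooth_on_imp_differentiable)
next
  case (add g h)
  then show ?case by (simp add: differentiable_add)
next
  case (mult g h)
  then show ?case by (simp add: differentiable_mult)
next
  case (inverse g)
  then show ?case by (intro differentiable_inverse) auto
next
  case (compose T k g)
  then show ?case
    using smooth_on_imp_differentiable[of T k "g z"] differentiable_chain_at[of g z k]
    by (simp add: o_def)
qed

lemma smooth_closure_partial:
  assumes U: "open U" and "smooth_closure U g" and i: "i \<in> Basis"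
  shows "\<exists>h. smooth_closure U h \<and> (\<forall>z\<in>U. frechet_derivative g (at z) i = h z)"
  using assms(2)
proof induction
  case (base g)
  then show ?case using smooth_on_frechet_derivative i smooth_closure.base by blast
next
  case (add g h)
  then obtain g' h' where "smooth_closure U g'" "\<forall>z\<in>U. frechet_derivative g (at z) i = g' z"
    "smooth_closure U h'" "\<forall>z\<in>U. frechet_derivative h (at z) i = h' z"
    by blast
  moreover have "frechet_derivative (\<lambda>z. g z + h z) (at z) i
      = frechet_derivative g (at z) i + frechet_derivative h (at z) i" if "z \<in> U" for z
    using add that smooth_closure_differentiable
    by (intro frechet_derivative_apply has_derivative_add has_derivative_frechet_derivative) auto
  ultimately show ?case by (intro exI[of _ "\<lambda>z. g' z + h' z"]) (auto intro: smooth_closure.add)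
next
  case (mult g h)
  then obtain g' h' where "smooth_closure U g'" "\<forall>z\<in>U. frechet_derivative g (at z) i = g' z"
    "smooth_closure U h'" "\<forall>z\<in>U. frechet_derivative h (at z) i = h' z"
    by blast
  moreover have "frechet_derivative (\<lambda>z. g z * h z) (at z) i
      = g z * frechet_derivative h (at z) i + frechet_derivative g (at z) i * h z" if "z \<in> U" for z
    using mult that smooth_closure_differentiable
    by (intro frechet_derivative_apply has_derivative_mult has_derivative_frechet_derivative) auto
  ultimately show ?case
    using mult by (intro exI[of _ "\<lambda>z. g z * h' z + g' z * h z"])
      (auto intro: smooth_closure.add smooth_closure.mult)
next
  case (inverse g)
  then obtain g' where g': "smooth_closure U g'" "\<forall>z\<in>U. frechet_derivative g (at z) i = g' z"
    by blast
  let ?h = "\<lambda>z. inverse (g z) * inverse (g z) * (- 1 * g' z)"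
  have "smooth_closure U ?h"
    using inverse g' smooth_closure.base[OF smooth_on_const[OF U]]
    by (intro smooth_closure.mult smooth_closure.inverse) auto
  moreover have "\<forall>z\<in>U. frechet_derivative (\<lambda>z. inverse (g z)) (at z) i = ?h z"
    using g'(2) inverse(2) smooth_closure_differentiable[OF inverse(1)]
    by (simp add: frechet_derivative_inverse_apply)
  ultimately show ?case by blast
next
  case (compose T k g)
  then obtain g' where g': "smooth_closure U g'" "\<forall>z\<in>U. frechet_derivative g (at z) i = g' z"
    by blast
  let ?h = "\<lambda>z. deriv k (g z) * g' z"
  have "smooth_closure U ?h"
    by (rule smooth_closure.mult[OF smooth_closure.compose[OF smooth_on_deriv[OF compose(2,1)]
          compose(2-4)] g'(1)])
  moreover have "\<forall>z\<in>U. frechet_derivative (\<lambda>z. k (g z)) (at z) i = ?h z"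
    using g'(2) compose(4) smooth_closure_differentiable[OF compose(3)]
      smooth_on_imp_differentiable[OF compose(1)]
    by (simp add: frechet_derivative_compose_apply)
  ultimately show ?case by blast
qed

lemma smooth_closure_imp_smooth_on:
  fixes U :: "'a::euclidean_space set"
  assumes "open U" "smooth_closure U g"
  shows "smooth_on U g"
proof (rule smooth_on_coinduct_upto[where P = "smooth_closure U", OF assms])
  fix g assume g: "smooth_closure U g"
  show "(\<forall>z\<in>U. g differentiable (at z)) \<and> (\<forall>i\<in>Basis. \<exists>h.
      (smooth_closure U h \<or> smooth_on U h) \<and> (\<forall>z\<in>U. frechet_derivative g (at z) i = h z))"
  proof (intro conjI ballI)
    show "g differentiable (at z)" if "z \<in> U" for z using smooth_closure_differentiable[OF g that] .
    fix i :: 'a assume "i \<in> Basis"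
    then obtain h where "smooth_closure U h" "\<forall>z\<in>U. frechet_derivative g (at z) i = h z"
      using smooth_closure_partial[OF assms(1) g] by blast
    then show "\<exists>h. (smooth_closure U h \<or> smooth_on U h) \<and> (\<forall>z\<in>U. frechet_derivative g (at z) i = h z)"
      by blast
  qed
qed

lemma smooth_on_add:
  assumes "open U" "smooth_on U g" "smooth_on U h"
  shows "smooth_on U (\<lambda>z. g z + h z)"
  by (rule smooth_closure_imp_smooth_on[OF assms(1)
        smooth_closure.add[OF smooth_closure.base[OF assms(2)] smooth_closure.base[OF assms(3)]]])

lemma smooth_on_mult:
  assumes "open U" "smooth_on U g" "smooth_on U h"
  shows "smooth_on U (\<lambda>z. g z * h z)"
  by (rule smooth_closure_imp_smooth_on[OF assms(1)
        smooth_closure.mult[OF smooth_closure.base[OF assms(2)] smooth_closure.base[OF assms(3)]]])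

lemma smooth_on_diff:
  assumes U: "open U" and "smooth_on U g" "smooth_on U h"
  shows "smooth_on U (\<lambda>z. g z - h z)"
  using smooth_on_add[OF U \<open>smooth_on U g\<close> smooth_on_mult[OF U smooth_on_const[OF U] \<open>smooth_on U h\<close>],
      of "- 1"]
  by simp

lemma smooth_on_divide:
  assumes "open U" "smooth_on U g" "smooth_on U h" "\<forall>z\<in>U. h z \<noteq> 0"
  shows "smooth_on U (\<lambda>z. g z / h z)"
  unfolding divide_inverse
  by (rule smooth_closure_imp_smooth_on[OF assms(1) smooth_closure.mult[OF smooth_closure.base[OF assms(2)]
        smooth_closure.inverse[OF smooth_closure.base[OF assms(3)] assms(4)]]])

lemma smooth_on_compose:
  assumes "open U" "open T" "smooth_on T k" "smooth_on U g" "\<forall>z\<in>U. g z \<in> T"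
  shows "smooth_on U (\<lambda>z. k (g z))"
  by (rule smooth_closure_imp_smooth_on[OF assms(1)
        smooth_closure.compose[OF assms(3,2) smooth_closure.base[OF assms(4)] assms(5)]])

section \<open>Directional derivatives\<close>

definition dir_deriv :: "'a::real_normed_vector \<Rightarrow> ('a \<Rightarrow> real) \<Rightarrow> 'a \<Rightarrow> real" where
  "dir_deriv v g z = deriv (\<lambda>t. g (z + t *\<^sub>R v)) 0"

lemma has_real_derivative_along_line:
  assumes "g differentiable (at (a + s *\<^sub>R v))"
  shows "((\<lambda>t. g (a + t *\<^sub>R v)) has_real_derivative frechet_derivative g (at (a + s *\<^sub>R v)) v) (at s)"
proof -
  let ?G = "frechet_derivative g (at (a + s *\<^sub>R v))"
  have "linear ?G" using assms by (rule linear_frechet_derivative)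
  have "((\<lambda>t. a + t *\<^sub>R v) has_derivative (\<lambda>h. h *\<^sub>R v)) (at s)"
    by (auto intro!: derivative_eq_intros)
  then have "((\<lambda>t. g (a + t *\<^sub>R v)) has_derivative (\<lambda>h. ?G (h *\<^sub>R v))) (at s)"
    by (rule has_derivative_compose) (rule has_derivative_frechet_derivative[OF assms])
  moreover have "(\<lambda>h. ?G (h *\<^sub>R v)) = (\<lambda>h. ?G v * h)"
    using \<open>linear ?G\<close> by (auto simp: linear_iff mult.commute)
  ultimately show ?thesis by (simp add: has_field_derivative_def)
qed

lemma dir_deriv_frechet: "g differentiable (at z) \<Longrightarrow> dir_deriv v g z = frechet_derivative g (at z) v"
  unfolding dir_deriv_def using has_real_derivative_along_line[of g z 0 v] by (simp add: DERIV_imp_deriv)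

lemma dir_deriv_shift:
  assumes "\<And>t. g (z + t *\<^sub>R v) = h (c + t)"
  shows "dir_deriv v g z = deriv h c"
proof -
  have "(\<lambda>t. g (z + t *\<^sub>R v)) = h \<circ> (\<lambda>t. c + t)" by (auto simp: assms)
  then show ?thesis by (simp add: dir_deriv_def deriv_shift_0[of h c])
qed

lemma dir_deriv_cong:
  assumes "open U" "z \<in> U" "\<forall>y\<in>U. g y = h y"
  shows "dir_deriv v g z = dir_deriv v h z"
proof -
  have "open ((\<lambda>t::real. z + t *\<^sub>R v) -` U)"
    by (rule open_vimage[OF assms(1)]) (intro continuous_intros)
  then have "eventually (\<lambda>t. g (z + t *\<^sub>R v) = h (z + t *\<^sub>R v)) (nhds 0)"
    unfolding eventually_nhds using assms(2,3) by (intro exI[of _ "(\<lambda>t. z + t *\<^sub>R v) -` U"]) auto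
  then show ?thesis unfolding dir_deriv_def by (rule deriv_cong_ev) simp
qed

lemma dir_deriv_const: "dir_deriv v (\<lambda>z. c) z = 0"
  by (simp add: dir_deriv_def)

context
  fixes g h :: "'a::real_normed_vector \<Rightarrow> real" and z :: 'a
  assumes g: "g differentiable (at z)" and h: "h differentiable (at z)"
begin

lemma dir_deriv_add: "dir_deriv v (\<lambda>z. g z + h z) z = dir_deriv v g z + dir_deriv v h z"
  using g h by (simp add: dir_deriv_frechet frechet_derivative_apply[OF has_derivative_add[OF
        has_derivative_frechet_derivative[OF g] has_derivative_frechet_derivative[OF h]]])

lemma dir_deriv_diff: "dir_deriv v (\<lambda>z. g z - h z) z = dir_deriv v g z - dir_deriv v h z"
  using g h by (simp add: dir_deriv_frechet frechet_derivative_apply[OF has_derivative_diff[OF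
        has_derivative_frechet_derivative[OF g] has_derivative_frechet_derivative[OF h]]])

lemma dir_deriv_mult: "dir_deriv v (\<lambda>z. g z * h z) z = g z * dir_deriv v h z + dir_deriv v g z * h z"
  using g h by (simp add: dir_deriv_frechet frechet_derivative_apply[OF has_derivative_mult[OF
        has_derivative_frechet_derivative[OF g] has_derivative_frechet_derivative[OF h]]])

lemma dir_deriv_divide:
  assumes "h z \<noteq> 0"
  shows "dir_deriv v (\<lambda>z. g z / h z) z = (dir_deriv v g z * h z - g z * dir_deriv v h z) / (h z)^2"
proof -
  have "((\<lambda>z. g z / h z) has_derivative (\<lambda>x. (frechet_derivative g (at z) x * h z
      - g z * frechet_derivative h (at z) x) / (h z * h z))) (at z)"
    using g h assms by (intro has_derivative_divide' has_derivative_frechet_derivative)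
  moreover have "(\<lambda>z. g z / h z) differentiable (at z)" using g h assms by simp
  ultimately show ?thesis
    using g h by (simp add: dir_deriv_frechet frechet_derivative_apply power2_eq_square)
qed

end

lemma dir_deriv_minus: "g differentiable (at z) \<Longrightarrow> dir_deriv v (\<lambda>z. - g z) z = - dir_deriv v g z"
  by (simp add: dir_deriv_frechet
      frechet_derivative_apply[OF has_derivative_minus[OF has_derivative_frechet_derivative]])

lemma dir_deriv_power:
  "g differentiable (at z) \<Longrightarrow> dir_deriv v (\<lambda>z. g z ^ n) z = of_nat n * g z ^ (n - 1) * dir_deriv v g z"
  by (simp add: dir_deriv_frechet mult.commute mult.left_commute
      frechet_derivative_apply[OF has_derivative_power[OF has_derivative_frechet_derivative]])

lemma dir_deriv_compose:
  assumes "g differentiable (at z)" "k differentiable (at (g z))"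
  shows "dir_deriv v (\<lambda>z. k (g z)) z = deriv k (g z) * dir_deriv v g z"
  using assms differentiable_chain_at[OF assms]
  by (simp add: dir_deriv_frechet frechet_derivative_compose_apply o_def)

lemma dir_deriv_bounded_linear: "bounded_linear l \<Longrightarrow> dir_deriv v l z = l v"
  by (metis bounded_linear_imp_has_derivative differentiableI dir_deriv_frechet frechet_derivative_apply)

lemma smooth_on_dir_deriv:
  assumes "open U" "smooth_on U g" "v \<in> Basis"
  shows "smooth_on U (dir_deriv v g)"
  using smooth_on_cong[OF assms(1) smooth_on_frechet_derivative[OF assms(2,3)]]
    dir_deriv_frechet smooth_on_imp_differentiable[OF assms(2)]
  by metis

lemma second_difference_mean_value:
  fixes g :: "'a::real_normed_vector \<Rightarrow> real"
  assumes h: "h > 0"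
    and rect: "\<And>s t. 0 \<le> s \<Longrightarrow> s \<le> h \<Longrightarrow> 0 \<le> t \<Longrightarrow> t \<le> h \<Longrightarrow> z + s *\<^sub>R v + t *\<^sub>R w \<in> U"
    and g: "\<forall>y\<in>U. g differentiable (at y)"
    and g_v: "\<forall>y\<in>U. (\<lambda>y. frechet_derivative g (at y) v) differentiable (at y)"
  obtains s t where "0 < s" "s < h" "0 < t" "t < h"
    "g (z + h *\<^sub>R v + h *\<^sub>R w) - g (z + h *\<^sub>R v) - g (z + h *\<^sub>R w) + g z
      = h * h * frechet_derivative (\<lambda>y. frechet_derivative g (at y) v) (at (z + s *\<^sub>R v + t *\<^sub>R w)) w"
proof -
  define G where "G = (\<lambda>y. frechet_derivative g (at y) v)"
  define Q where "Q = (\<lambda>s t. z + s *\<^sub>R v + t *\<^sub>R w)"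
  have Q_in_U: "Q s t \<in> U" if "0 \<le> s" "s \<le> h" "0 \<le> t" "t \<le> h" for s t
    using rect[OF that] by (simp add: Q_def)
  have along_v: "((\<lambda>s. F (Q s t)) has_real_derivative frechet_derivative F (at (Q s t)) v) (at s)"
    if "F differentiable (at (Q s t))" for F s t
  proof -
    have "Q s t = (z + t *\<^sub>R w) + s *\<^sub>R v" for s by (simp add: Q_def algebra_simps)
    then show ?thesis using has_real_derivative_along_line[of F "z + t *\<^sub>R w" s v] that by simp
  qed
  have along_w: "((\<lambda>t. F (Q s t)) has_real_derivative frechet_derivative F (at (Q s t)) w) (at t)"
    if "F differentiable (at (Q s t))" for F s t
    using has_real_derivative_along_line[of F "z + s *\<^sub>R v" t w] that by (simp add: Q_def)
  have "\<exists>s. 0 < s \<and> s < h \<and> (g (Q h h) - g (Q h 0)) - (g (Q 0 h) - g (Q 0 0))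
      = (h - 0) * (G (Q s h) - G (Q s 0))"
  proof (rule MVT2[OF h])
    fix s assume "0 \<le> s" "s \<le> h"
    then show "((\<lambda>s. g (Q s h) - g (Q s 0)) has_real_derivative G (Q s h) - G (Q s 0)) (at s)"
      unfolding G_def using g Q_in_U h by (intro DERIV_diff along_v) auto
  qed
  then obtain s where s: "0 < s" "s < h"
    "(g (Q h h) - g (Q h 0)) - (g (Q 0 h) - g (Q 0 0)) = h * (G (Q s h) - G (Q s 0))"
    by auto
  have "\<exists>t. 0 < t \<and> t < h \<and> G (Q s h) - G (Q s 0) = (h - 0) * frechet_derivative G (at (Q s t)) w"
  proof (rule MVT2[OF h])
    fix t assume "0 \<le> t" "t \<le> h"
    then show "((\<lambda>t. G (Q s t)) has_real_derivative frechet_derivative G (at (Q s t)) w) (at t)"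
      using g_v Q_in_U s by (intro along_w) (auto simp: G_def)
  qed
  then obtain t where "0 < t" "t < h" "G (Q s h) - G (Q s 0) = h * frechet_derivative G (at (Q s t)) w"
    by auto
  with s that show ?thesis unfolding G_def Q_def by (simp add: algebra_simps)
qed

lemma small_rectangle:
  fixes z v w :: "'a::real_normed_vector"
  assumes "m > 0"
  obtains h where "h > 0"
    "\<And>s t. 0 \<le> s \<Longrightarrow> s \<le> h \<Longrightarrow> 0 \<le> t \<Longrightarrow> t \<le> h \<Longrightarrow> dist (z + s *\<^sub>R v + t *\<^sub>R w) z < m"
proof -
  define N where "N = norm v + norm w + 1"
  define h where "h = m / (2 * N)"
  have "N > 0" by (simp add: N_def add_nonneg_pos)
  have "dist (z + s *\<^sub>R v + t *\<^sub>R w) z < m" if "0 \<le> s" "s \<le> h" "0 \<le> t" "t \<le> h" for s t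
  proof -
    have "dist (z + s *\<^sub>R v + t *\<^sub>R w) z \<le> s * norm v + t * norm w"
      using that norm_triangle_ineq[of "s *\<^sub>R v" "t *\<^sub>R w"] by (simp add: dist_norm)
    also have "\<dots> \<le> h * N"
      using that by (simp add: N_def distrib_left add_mono mult_right_mono add_increasing2)
    also have "\<dots> = m / 2" using \<open>N > 0\<close> by (simp add: h_def)
    also have "\<dots> < m" using assms by simp
    finally show ?thesis .
  qed
  moreover have "h > 0" using assms \<open>N > 0\<close> by (simp add: h_def)
  ultimately show ?thesis using that by blast
qed

lemma frechet_derivative_symmetric:
  fixes g :: "'a::real_normed_vector \<Rightarrow> real"
  defines "G \<equiv> \<lambda>v y. frechet_derivative g (at y) v"
  assumes U: "open U" "z \<in> U"
    and g: "\<forall>y\<in>U. g differentiable (at y)"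
    and G_diff: "\<forall>y\<in>U. G v differentiable (at y)" "\<forall>y\<in>U. G w differentiable (at y)"
    and G_cont: "continuous (at z) (\<lambda>y. frechet_derivative (G v) (at y) w)"
      "continuous (at z) (\<lambda>y. frechet_derivative (G w) (at y) v)"
  shows "frechet_derivative (G v) (at z) w = frechet_derivative (G w) (at z) v"
proof -
  define M where "M = (\<lambda>v w y. frechet_derivative (G v) (at y) w)"
  \<comment> \<open>On a small square the second difference of \<open>g\<close> is \<open>h\<^sup>2\<close> times either mixed derivative,
    taken at two points near \<open>z\<close>.\<close>
  have close: "\<bar>M v w z - M w v z\<bar> < 2 * e" if "e > 0" for e
  proof -
    obtain d1 where d1: "d1 > 0" "\<And>y. dist y z < d1 \<Longrightarrow> dist (M v w y) (M v w z) < e"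
      using G_cont(1) \<open>e > 0\<close> unfolding continuous_at_eps_delta M_def by blast
    obtain d2 where d2: "d2 > 0" "\<And>y. dist y z < d2 \<Longrightarrow> dist (M w v y) (M w v z) < e"
      using G_cont(2) \<open>e > 0\<close> unfolding continuous_at_eps_delta M_def by blast
    obtain r where r: "r > 0" "ball z r \<subseteq> U" using U open_contains_ball by blast
    have "min r (min d1 d2) > 0" using r d1 d2 by simp
    then obtain h where "h > 0" and near: "\<And>s t. 0 \<le> s \<Longrightarrow> s \<le> h \<Longrightarrow> 0 \<le> t \<Longrightarrow> t \<le> h \<Longrightarrow>
        dist (z + s *\<^sub>R v + t *\<^sub>R w) z < min r (min d1 d2)"
      by (rule small_rectangle[where z = z and v = v and w = w]) blast
    have rect: "z + s *\<^sub>R v + t *\<^sub>R w \<in> U" "z + t *\<^sub>R w + s *\<^sub>R v \<in> U"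
      if "0 \<le> s" "s \<le> h" "0 \<le> t" "t \<le> h" for s t
      using near[OF that] r(2) by (auto simp: dist_commute add.commute add.left_commute)
    obtain s t where st: "0 < s" "s < h" "0 < t" "t < h"
      "g (z + h *\<^sub>R v + h *\<^sub>R w) - g (z + h *\<^sub>R v) - g (z + h *\<^sub>R w) + g z
        = h * h * M v w (z + s *\<^sub>R v + t *\<^sub>R w)"
      using second_difference_mean_value[OF \<open>h > 0\<close> rect(1) g G_diff(1)[unfolded G_def]]
      unfolding M_def G_def by blast
    obtain s' t' where st': "0 < s'" "s' < h" "0 < t'" "t' < h"
      "g (z + h *\<^sub>R w + h *\<^sub>R v) - g (z + h *\<^sub>R w) - g (z + h *\<^sub>R v) + g z
        = h * h * M w v (z + s' *\<^sub>R w + t' *\<^sub>R v)"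
      using second_difference_mean_value[OF \<open>h > 0\<close> rect(2) g G_diff(2)[unfolded G_def]]
      unfolding M_def G_def by blast
    have "M v w (z + s *\<^sub>R v + t *\<^sub>R w) = M w v (z + s' *\<^sub>R w + t' *\<^sub>R v)"
      using st(5) st'(5) \<open>h > 0\<close> by (simp add: algebra_simps)
    moreover have "dist (M v w (z + s *\<^sub>R v + t *\<^sub>R w)) (M v w z) < e"
      using near[of s t] st d1(2) by simp
    moreover have "dist (M w v (z + s' *\<^sub>R w + t' *\<^sub>R v)) (M w v z) < e"
      using near[of t' s'] st' d2(2) by (simp add: add.commute add.left_commute)
    ultimately show ?thesis by (simp add: dist_real_def)
  qed
  have "M v w z = M w v z"
  proof (rule ccontr)
    assume "M v w z \<noteq> M w v z"
    then show False using close[of "\<bar>M v w z - M w v z\<bar> / 2"] by simp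
  qed
  then show ?thesis by (simp add: M_def)
qed

lemma dir_deriv_commute:
  assumes U: "open U" and g: "smooth_on U g" and "z \<in> U" "v \<in> Basis" "w \<in> Basis"
  shows "dir_deriv w (dir_deriv v g) z = dir_deriv v (dir_deriv w g) z"
proof -
  define G where "G = (\<lambda>v y. frechet_derivative g (at y) v)"
  have smooth_G: "smooth_on U (G v)" "smooth_on U (G w)"
    unfolding G_def using smooth_on_frechet_derivative[OF g] assms(4,5) by auto
  have "dir_deriv w (dir_deriv v g) z = dir_deriv w (G v) z"
    "dir_deriv v (dir_deriv w g) z = dir_deriv v (G w) z"
    using dir_deriv_frechet smooth_on_imp_differentiable[OF g] \<open>z \<in> U\<close>
    by (auto simp: G_def intro!: dir_deriv_cong[OF U])
  moreover have "frechet_derivative (G v) (at z) w = frechet_derivative (G w) (at z) v"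
    unfolding G_def
  proof (rule frechet_derivative_symmetric[OF U(1) \<open>z \<in> U\<close>])
    show "continuous (at z) (\<lambda>y. frechet_derivative (\<lambda>y. frechet_derivative g (at y) v) (at y) w)"
      "continuous (at z) (\<lambda>y. frechet_derivative (\<lambda>y. frechet_derivative g (at y) w) (at y) v)"
      using smooth_on_frechet_derivative[OF smooth_G(1)] smooth_on_frechet_derivative[OF smooth_G(2)]
        smooth_on_imp_differentiable \<open>z \<in> U\<close> assms(4,5) differentiable_imp_continuous_within
      unfolding G_def by blast+
  qed (use g smooth_G smooth_on_imp_differentiable in \<open>auto simp: G_def\<close>)
  ultimately show ?thesis
    using dir_deriv_frechet smooth_on_imp_differentiable smooth_G \<open>z \<in> U\<close> by metis
qed

section \<open>The total derivative\<close>

abbreviation e_x :: R4 where "e_x \<equiv> (1, 0, 0, 0)"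
abbreviation e_u :: R4 where "e_u \<equiv> (0, 1, 0, 0)"
abbreviation e_p :: R4 where "e_p \<equiv> (0, 0, 1, 0)"
abbreviation e_q :: R4 where "e_q \<equiv> (0, 0, 0, 1)"

lemma R4_Basis: "e_x \<in> Basis" "e_u \<in> Basis" "e_p \<in> Basis" "e_q \<in> Basis"
  by (simp_all add: Basis_prod_def zero_prod_def)

lemma px4_eq_dir_deriv: "px4 g = dir_deriv e_x g"
  by (rule ext, clarsimp simp: px4_def intro!: dir_deriv_shift[symmetric])

lemma pu4_eq_dir_deriv: "pu4 g = dir_deriv e_u g"
  by (rule ext, clarsimp simp: pu4_def intro!: dir_deriv_shift[symmetric])

lemma pp4_eq_dir_deriv: "pp4 g = dir_deriv e_p g"
  by (rule ext, clarsimp simp: pp4_def intro!: dir_deriv_shift[symmetric])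

lemma pq4_eq_dir_deriv: "pq4 g = dir_deriv e_q g"
  by (rule ext, clarsimp simp: pq4_def intro!: dir_deriv_shift[symmetric])

lemma pu3_eq_dir_deriv: "pu3 g = dir_deriv (0, 1, 0) g"
  by (rule ext, clarsimp simp: pu3_def intro!: dir_deriv_shift[symmetric])

lemma pp3_eq_dir_deriv: "pp3 g = dir_deriv (0, 0, 1) g"
  by (rule ext, clarsimp simp: pp3_def intro!: dir_deriv_shift[symmetric])

definition p_coord :: "R4 \<Rightarrow> real" where "p_coord z = fst (snd (snd z))"
definition q_coord :: "R4 \<Rightarrow> real" where "q_coord z = snd (snd (snd z))"

lemma bounded_linear_p_coord: "bounded_linear p_coord"
  unfolding p_coord_def
  by (intro bounded_linear_compose[OF bounded_linear_fst] bounded_linear_compose[OF bounded_linear_snd]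
      bounded_linear_snd)

lemma bounded_linear_q_coord: "bounded_linear q_coord"
  unfolding q_coord_def by (intro bounded_linear_compose[OF bounded_linear_snd] bounded_linear_snd)

lemma p_coord_Pair [simp]: "p_coord (x, u, p, q) = p"
  and q_coord_Pair [simp]: "q_coord (x, u, p, q) = q"
  by (simp_all add: p_coord_def q_coord_def)

lemma dir_deriv_p_coord [simp]: "dir_deriv v p_coord z = p_coord v"
  by (rule dir_deriv_bounded_linear[OF bounded_linear_p_coord])

lemma differentiable_p_coord [simp]: "p_coord differentiable (at z)"
  and differentiable_q_coord [simp]: "q_coord differentiable (at z)"
  using bounded_linear_p_coord bounded_linear_q_coord bounded_linear_imp_differentiable by blast+

lemma Dhat_eq_dir_deriv:
  "Dhat f g z = dir_deriv e_x g z + p_coord z * dir_deriv e_u g z + q_coord z * dir_deriv e_p g z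
    + f z * dir_deriv e_q g z"
  by (cases z) (simp add: Dhat_def px4_eq_dir_deriv pu4_eq_dir_deriv pp4_eq_dir_deriv pq4_eq_dir_deriv
      p_coord_def q_coord_def)

definition proj3 :: "R4 \<Rightarrow> R3" where "proj3 z = (fst z, fst (snd z), fst (snd (snd z)))"

lemma bounded_linear_proj3: "bounded_linear proj3"
  unfolding proj3_def
  by (intro bounded_linear_Pair bounded_linear_fst bounded_linear_compose[OF bounded_linear_fst]
      bounded_linear_compose[OF bounded_linear_snd] bounded_linear_snd)

lemma lift3_apply: "lift3 g z = g (proj3 z)"
  by (cases z) (simp add: lift3_def proj3_def)

lemma lift3_Pair [simp]: "lift3 g (x, u, p, q) = g (x, u, p)"
  by (simp add: lift3_def)

lemma dir_deriv_e_q_lift3 [simp]: "dir_deriv e_q (lift3 g) z = 0"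
  by (simp add: dir_deriv_def lift3_apply proj3_def)

lemma px4_lift3: "px4 (lift3 g) z = lift3 (px3 g) z"
  by (cases z) (simp add: px4_def px3_def lift3_def)

lemma pu4_lift3: "pu4 (lift3 g) z = lift3 (pu3 g) z"
  by (cases z) (simp add: pu4_def pu3_def lift3_def)

lemma pp4_lift3: "pp4 (lift3 g) z = lift3 (pp3 g) z"
  by (cases z) (simp add: pp4_def pp3_def lift3_def)

lemma has_derivative_lift3:
  "g differentiable (at (proj3 z)) \<Longrightarrow>
    (lift3 g has_derivative (\<lambda>x. frechet_derivative g (at (proj3 z)) (proj3 x))) (at z)"
  unfolding lift3_apply[abs_def]
  by (rule has_derivative_compose[OF bounded_linear_imp_has_derivative[OF bounded_linear_proj3]
        has_derivative_frechet_derivative])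

lemma smooth_on_lift3:
  assumes W: "open W" and W_V: "\<forall>x u p q. (x,u,p,q) \<in> W \<longrightarrow> (x,u,p) \<in> V" and g: "smooth_on V g"
  shows "smooth_on W (lift3 g)"
proof (rule smooth_on_coinduct_upto[where P = "\<lambda>h. \<exists>g. smooth_on V g \<and> h = lift3 g"])
  have proj3_V: "proj3 z \<in> V" if "z \<in> W" for z using W_V that by (cases z) (auto simp: proj3_def)
  fix h assume "\<exists>g. smooth_on V g \<and> h = lift3 g"
  then obtain g where g: "smooth_on V g" "h = lift3 g" by blast
  have deriv: "(h has_derivative (\<lambda>x. frechet_derivative g (at (proj3 z)) (proj3 x))) (at z)"
    if "z \<in> W" for z
    unfolding g(2) using smooth_on_imp_differentiable[OF g(1) proj3_V[OF that]] by (rule has_derivative_lift3)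
  show "(\<forall>z\<in>W. h differentiable (at z)) \<and> (\<forall>i\<in>Basis. \<exists>h'.
      ((\<exists>g. smooth_on V g \<and> h' = lift3 g) \<or> smooth_on W h') \<and>
      (\<forall>z\<in>W. frechet_derivative h (at z) i = h' z))"
  proof (intro conjI ballI)
    show "h differentiable (at z)" if "z \<in> W" for z using deriv[OF that] by (rule differentiableI)
    fix i :: R4 assume i: "i \<in> Basis"
    show "\<exists>h'. ((\<exists>g. smooth_on V g \<and> h' = lift3 g) \<or> smooth_on W h') \<and>
        (\<forall>z\<in>W. frechet_derivative h (at z) i = h' z)"
    proof (cases "proj3 i \<in> Basis")
      case True
      show ?thesis
        by (rule exI[of _ "lift3 (\<lambda>y. frechet_derivative g (at y) (proj3 i))"])
          (use smooth_on_frechet_derivative[OF g(1) True] frechet_derivative_apply[OF deriv]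
            in \<open>auto simp: lift3_apply\<close>)
    next
      case False
      then have "proj3 i = 0" using i by (auto simp: Basis_prod_def proj3_def zero_prod_def)
      then have "frechet_derivative h (at z) i = 0" if "z \<in> W" for z
        using frechet_derivative_apply[OF deriv[OF that]] smooth_on_imp_differentiable[OF g(1) proj3_V[OF that]]
          linear_frechet_derivative linear_0 by metis
      then show ?thesis using smooth_on_const[OF W] by (intro exI[of _ "\<lambda>_. 0"]) auto
    qed
  qed
qed (use W g in auto)

lemma Dhat_const: "Dhat f (\<lambda>z. c) z = 0"
  by (simp add: Dhat_eq_dir_deriv dir_deriv_const)

lemma Dhat_cong: "open U \<Longrightarrow> z \<in> U \<Longrightarrow> \<forall>y\<in>U. g y = h y \<Longrightarrow> Dhat f g z = Dhat f h z"
  by (simp add: Dhat_eq_dir_deriv dir_deriv_cong[of U z g h])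

context
  fixes g h :: "R4 \<Rightarrow> real" and z :: R4
  assumes g: "g differentiable (at z)" and h: "h differentiable (at z)"
begin

lemma Dhat_add: "Dhat f (\<lambda>z. g z + h z) z = Dhat f g z + Dhat f h z"
  using g h by (simp add: Dhat_eq_dir_deriv dir_deriv_add algebra_simps)

lemma Dhat_diff: "Dhat f (\<lambda>z. g z - h z) z = Dhat f g z - Dhat f h z"
  using g h by (simp add: Dhat_eq_dir_deriv dir_deriv_diff algebra_simps)

lemma Dhat_mult: "Dhat f (\<lambda>z. g z * h z) z = g z * Dhat f h z + Dhat f g z * h z"
  using g h by (simp add: Dhat_eq_dir_deriv dir_deriv_mult algebra_simps)

lemma Dhat_divide: "h z \<noteq> 0 \<Longrightarrow> Dhat f (\<lambda>z. g z / h z) z = (Dhat f g z * h z - g z * Dhat f h z) / (h z)^2"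
  using g h by (simp add: Dhat_eq_dir_deriv dir_deriv_divide add_divide_distrib diff_divide_distrib
      algebra_simps)

end

lemma Dhat_minus: "g differentiable (at z) \<Longrightarrow> Dhat f (\<lambda>z. - g z) z = - Dhat f g z"
  by (simp add: Dhat_eq_dir_deriv dir_deriv_minus algebra_simps)

lemma Dhat_power: "g differentiable (at z) \<Longrightarrow> Dhat f (\<lambda>z. g z ^ n) z = of_nat n * g z ^ (n - 1) * Dhat f g z"
  by (simp add: Dhat_eq_dir_deriv dir_deriv_power algebra_simps)

lemma Dhat_compose:
  assumes "g differentiable (at z)" "k differentiable (at (g z))"
  shows "Dhat f (\<lambda>z. k (g z)) z = deriv k (g z) * Dhat f g z"
  by (simp add: Dhat_eq_dir_deriv dir_deriv_compose[OF assms] distrib_left mult.left_commute)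

lemmas Dhat_simps = Dhat_add Dhat_diff Dhat_minus Dhat_mult Dhat_divide Dhat_power Dhat_const

lemma smooth_on_Dhat:
  assumes W: "open W" and f: "smooth_on W f" and g: "smooth_on W g"
  shows "smooth_on W (Dhat f g)"
proof -
  have dg: "smooth_on W (dir_deriv e g)" if "e \<in> Basis" for e
    using smooth_on_dir_deriv[OF W g that] .
  have p: "smooth_on W p_coord" and q: "smooth_on W q_coord"
    using smooth_on_bounded_linear[OF W] bounded_linear_p_coord bounded_linear_q_coord by auto
  show ?thesis
    unfolding Dhat_eq_dir_deriv[abs_def]
    by (intro smooth_on_add[OF W] smooth_on_mult[OF W] dg R4_Basis p q f)
qed

context
  fixes W :: "R4 set" and f g :: "R4 \<Rightarrow> real" and z :: R4
  assumes W: "open W" and f: "smooth_on W f" and g: "smooth_on W g" and z: "z \<in> W"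
begin

lemma dir_deriv_Dhat:
  "dir_deriv v (Dhat f g) z = dir_deriv v (dir_deriv e_x g) z
    + p_coord z * dir_deriv v (dir_deriv e_u g) z + p_coord v * dir_deriv e_u g z
    + q_coord z * dir_deriv v (dir_deriv e_p g) z + q_coord v * dir_deriv e_p g z
    + f z * dir_deriv v (dir_deriv e_q g) z + dir_deriv v f z * dir_deriv e_q g z"
proof -
  have d: "dir_deriv e g differentiable (at z)" if "e \<in> Basis" for e
    using smooth_on_imp_differentiable[OF smooth_on_dir_deriv[OF W g that] z] .
  note diff = d[OF R4_Basis(1)] d[OF R4_Basis(2)] d[OF R4_Basis(3)] d[OF R4_Basis(4)]
    smooth_on_imp_differentiable[OF f z] differentiable_p_coord differentiable_q_coord
  let ?D1 = "\<lambda>y. dir_deriv e_x g y + p_coord y * dir_deriv e_u g y"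
  let ?D2 = "\<lambda>y. ?D1 y + q_coord y * dir_deriv e_p g y"
  have "dir_deriv v (Dhat f g) z = dir_deriv v ?D2 z + dir_deriv v (\<lambda>y. f y * dir_deriv e_q g y) z"
    unfolding Dhat_eq_dir_deriv[abs_def] by (rule dir_deriv_add) (intro differentiable_add differentiable_mult diff)+
  also have "dir_deriv v ?D2 z = dir_deriv v ?D1 z + dir_deriv v (\<lambda>y. q_coord y * dir_deriv e_p g y) z"
    by (rule dir_deriv_add) (intro differentiable_add differentiable_mult diff)+
  also have "dir_deriv v ?D1 z = dir_deriv v (dir_deriv e_x g) z + dir_deriv v (\<lambda>y. p_coord y * dir_deriv e_u g y) z"
    by (rule dir_deriv_add) (intro differentiable_mult diff)+
  finally show ?thesis
    using diff by (simp add: dir_deriv_mult dir_deriv_bounded_linear bounded_linear_p_coord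
        bounded_linear_q_coord)
qed

lemma dir_deriv_q_Dhat:
  "dir_deriv e_q (Dhat f g) z = Dhat f (dir_deriv e_q g) z + dir_deriv e_p g z + dir_deriv e_q f z * dir_deriv e_q g z"
  unfolding dir_deriv_Dhat unfolding Dhat_eq_dir_deriv using dir_deriv_commute[OF W g z] R4_Basis
  by (simp add: p_coord_def q_coord_def algebra_simps)

lemma dir_deriv_p_Dhat:
  "dir_deriv e_p (Dhat f g) z = Dhat f (dir_deriv e_p g) z + dir_deriv e_u g z + dir_deriv e_p f z * dir_deriv e_q g z"
  unfolding dir_deriv_Dhat unfolding Dhat_eq_dir_deriv using dir_deriv_commute[OF W g z] R4_Basis
  by (simp add: p_coord_def q_coord_def algebra_simps)

lemma dir_deriv_u_Dhat:
  "dir_deriv e_u (Dhat f g) z = Dhat f (dir_deriv e_u g) z + dir_deriv e_u f z * dir_deriv e_q g z"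
  unfolding dir_deriv_Dhat unfolding Dhat_eq_dir_deriv using dir_deriv_commute[OF W g z] R4_Basis
  by (simp add: p_coord_def q_coord_def algebra_simps)

end

lemma dir_deriv_Dhat_lift3:
  assumes "open W" "smooth_on W f" "smooth_on W (lift3 g)" "z \<in> W"
  shows "dir_deriv e_q (Dhat f (lift3 g)) z = dir_deriv e_p (lift3 g) z"
    and "dir_deriv e_p (Dhat f (lift3 g)) z = Dhat f (dir_deriv e_p (lift3 g)) z + dir_deriv e_u (lift3 g) z"
    and "dir_deriv e_u (Dhat f (lift3 g)) z = Dhat f (dir_deriv e_u (lift3 g)) z"
proof -
  have "dir_deriv e_q (lift3 g) = (\<lambda>_. 0)" by auto
  then show "dir_deriv e_q (Dhat f (lift3 g)) z = dir_deriv e_p (lift3 g) z"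
    "dir_deriv e_p (Dhat f (lift3 g)) z = Dhat f (dir_deriv e_p (lift3 g)) z + dir_deriv e_u (lift3 g) z"
    "dir_deriv e_u (Dhat f (lift3 g)) z = Dhat f (dir_deriv e_u (lift3 g)) z"
    using dir_deriv_q_Dhat[OF assms] dir_deriv_p_Dhat[OF assms] dir_deriv_u_Dhat[OF assms]
    by (simp_all add: Dhat_const)
qed

section \<open>Rational identities\<close>

text \<open>The algebra behind the computations of the invariants, stated for real variables so
  that \<open>field_simps\<close> does not have to look through function applications.\<close>

lemma f_p_identity:
  fixes a a1 a2 D d1 d2 Al Al1 Be B A P C :: real
  assumes "a \<noteq> 0" "D \<noteq> 0"
  shows "((B ^ 3 * P * (Al1 + Be) + (B ^ 3 * (C * Al) + 3 * B ^ 2 * (A * Al) * P) * D)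
   - (Al * (B ^ 3 * (C * D) + 3 * B ^ 2 * (A * D) * P) + Al1 * (B ^ 3 * P)
      + 2 * (a2 * D ^ 2 - a1 * (2 * D * d1)) / (D ^ 2) ^ 2
      - ((a * d2 + a1 * d1) * D ^ 3 - a * d1 * (3 * D ^ 2 * d1)) / (D ^ 3) ^ 2)
   - (B^3 * P * Be + a2 / D ^ 2 - a1 * d1 / D ^ 3)) * D ^ 2 / a
   = - 3 * a2 / a + 6 * a1 * d1 / (a * D) + d2 / D - 3 * d1 ^ 2 / D ^ 2"
  using assms by (simp add: field_simps) algebra

lemma f_u_identity:
  fixes a a1 a2 a3 D d1 d2 Be Be1 B A P C :: real
  assumes "a \<noteq> 0" "D \<noteq> 0"
  shows "((B ^ 3 * P * Be1 + (B ^ 3 * (C * Be + a) + 3 * B ^ 2 * (A * Be) * P) * D)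
   - (Be * (B ^ 3 * (C * D) + 3 * B ^ 2 * (A * D) * P) + Be1 * (B ^ 3 * P)
      + (a3 * D ^ 2 - a2 * (2 * D * d1)) / (D ^ 2) ^ 2
      - ((a1 * d2 + a2 * d1) * D ^ 3 - a1 * d1 * (3 * D ^ 2 * d1)) / (D ^ 3) ^ 2)) * D ^ 2 / a
   = B ^ 3 * D ^ 3 - a3 / a + 3 * a2 * d1 / (a * D) + a1 * d2 / (a * D) - 3 * a1 * d1 ^ 2 / (a * D ^ 2)"
  using assms by (simp add: field_simps) algebra

lemma I2_identity:
  fixes a a1 a2 D d1 d2 :: real
  assumes "a \<noteq> 0" "D \<noteq> 0"
  shows "- (2/9) * (3 * a1 / a - 3 * d1 / D) ^ 2
     - (- 3 * a2 / a + 6 * a1 * d1 / (a * D) + d2 / D - 3 * d1 ^ 2 / D ^ 2)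
     - (1/3) * (3 * ((a2 * a - a1 * a1) / a ^ 2) - 3 * ((d2 * D - d1 * d1) / D ^ 2))
   = 2 * a2 / a - (a1 / a) ^ 2 - 2 * (a1 / a) * (d1 / D)"
  using assms by (simp add: field_simps) algebra

lemma I3_identity:
  fixes a a1 a2 a3 D d1 d2 B :: real
  assumes "a \<noteq> 0" "D \<noteq> 0"
  shows "- (1/3) * (3 * a1 / a - 3 * d1 / D) * (2 * a2 / a - (a1 / a) ^ 2 - 2 * (a1 / a) * (d1 / D))
     - (B ^ 3 * D ^ 3 - a3 / a + 3 * a2 * d1 / (a * D) + a1 * d2 / (a * D) - 3 * a1 * d1 ^ 2 / (a * D ^ 2))
     - (1/2) * (2 * ((a3 * a - a2 * a1) / a ^ 2) - 2 * (a1 / a) * ((a2 * a - a1 * a1) / a ^ 2)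
          - 2 * ((a1 / a) * ((d2 * D - d1 * d1) / D ^ 2) + ((a2 * a - a1 * a1) / a ^ 2) * (d1 / D)))
   = - ((B * D) ^ 3)"
  using assms by (simp add: field_simps) algebra

lemma I5_identity:
  fixes a a1 D d1 B A :: real
  assumes "a \<noteq> 0" "D \<noteq> 0" "B \<noteq> 0"
  shows "((3 * a1 / a - 3 * d1 / D) * (- (B * D)) + 3 * (- (B * d1 + A * D * D))) / (3 * (- (B * D)) ^ 2)
     = - (A / B ^ 2) - a1 / (a * B * D)"
  using assms by (simp add: field_simps) algebra

lemma I7_identity:
  fixes a a1 lp D Al Be B :: real
  assumes "a \<noteq> 0" "D \<noteq> 0" "B \<noteq> 0" "lp * D = a1 * Al - a * Be"
  shows "- (- ((lp * (a * B * D) - a1 * (a * B * Al)) / (a * B * D) ^ 2)) * (- (B * D)) ^ 2 = - (B * Be)"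
proof -
  have "- (- ((lp * (a * B * D) - a1 * (a * B * Al)) / (a * B * D) ^ 2)) * (- (B * D)) ^ 2
      = B * (lp * D - a1 * Al) / a" using assms(1-3) by (simp add: field_simps) algebra
  also have "\<dots> = B * (- a * Be) / a" using assms(4) by simp
  also have "\<dots> = - (B * Be)" using assms(1) by simp
  finally show ?thesis .
qed

lemma Q_identity:
  fixes a a1 a2 lu D d1 Al Be Al1 Be1 B A A2 :: real
  assumes "a \<noteq> 0" "D \<noteq> 0" "B \<noteq> 0"
  defines "lp \<equiv> (a1 * Al - a * Be) / D"
  shows "lu = (A / B ^ 2 * (- (B * Be)) -
     (- ((3 * a1 / a - 3 * d1 / D) * (- (B * Be))
        + 3 * (- (B * D)) ^ 2 * (- ((A2 * Al * B ^ 2 - A * (2 * B * (A * Al))) / (B ^ 2) ^ 2)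
             - (((((a2 * Al + a1 * Al1 - (a1 * Be + a * Be1)) * D - (a1 * Al - a * Be) * d1) / D ^ 2) + lu) * (a * B * D)
                - a1 * (lp * B * D + a * (A * Al) * D + a * B * (Al1 + Be))) / (a * B * D) ^ 2)
        + 3 * (- (B * Be1 + A * Be * D))
        - 3 * (- (B * D)) * (- (B * Al)) * (- ((A2 * D * B ^ 2 - A * (2 * B * (A * D))) / (B ^ 2) ^ 2)
             - (a2 * (a * B * D) - a1 * (a1 * B * D + a * (A * D) * D + a * B * d1)) / (a * B * D) ^ 2))
       / (3 * (- (B * D))))) * a"
  using assms(1-3) unfolding lp_def by (simp add: field_simps) algebra

lemma K_identity:
  fixes a a1 a2 D d1 B A A2 :: real
  assumes "a \<noteq> 0" "D \<noteq> 0" "B \<noteq> 0"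
  shows "- (2 / (- (B * D))) * ((A2 * D * B ^ 2 - A * (2 * B * (A * D))) / (B ^ 2) ^ 2) + (A / B ^ 2) ^ 2
    = (2 * (- (B * D)) * (- ((A2 * D * B ^ 2 - A * (2 * B * (A * D))) / (B ^ 2) ^ 2)
             - (a2 * (a * B * D) - a1 * (a1 * B * D + a * (A * D) * D + a * B * d1)) / (a * B * D) ^ 2)
       - (2 * a2 / a - (a1 / a) ^ 2 - 2 * (a1 / a) * (d1 / D))
       + (- (B * D)) ^ 2 * (- (A / B ^ 2) - a1 / (a * B * D)) ^ 2) / (- (B * D)) ^ 2"
  using assms by (simp add: field_simps) algebra

section \<open>A contact transformation linearizing the equation\<close>

lemma R3_Basis: "(0::real, 1::real, 0::real) \<in> Basis" "(0::real, 0::real, 1::real) \<in> Basis"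
  by (simp_all add: Basis_prod_def zero_prod_def)

locale linearizing_contact_transformation =
  fixes f :: "R4 \<Rightarrow> real" and W :: "R4 set" and V :: "R3 set"
    and phi psi chi :: "R3 \<Rightarrow> real" and abar :: "real \<Rightarrow> real" and T :: "real set"
  assumes open_W: "open W" and smooth_f: "smooth_on W f"
    and W_V: "\<forall>x u p q. (x,u,p,q) \<in> W \<longrightarrow> (x,u,p) \<in> V"
    and contact: "contact_transformation V phi psi chi"
    and open_T: "open T" and phi_T: "phi ` V \<subseteq> T" and smooth_abar: "smooth_on T abar"
    and abar_phi_nonzero: "\<forall>z\<in>V. abar (phi z) \<noteq> 0"
    and linearizes: "equivalent_to_linear f W phi psi chi abar"
begin

lemma open_V: "open V"
  and smooth_phi: "smooth_on V phi" and smooth_psi: "smooth_on V psi" and smooth_chi: "smooth_on V chi"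
  using contact by (auto simp: contact_transformation_def)

text \<open>\<open>a1\<close> is the factor \<open>\<lambda>\<close> in \<open>d\<psi> - \<chi> d\<phi> = \<lambda> (du - p dx)\<close>.\<close>

definition a1 :: "R3 \<Rightarrow> real" where "a1 z = pu3 psi z - chi z * pu3 phi z"

lemma contact_equations:
  assumes "(x,u,p) \<in> V"
  shows "px3 psi (x,u,p) = chi (x,u,p) * px3 phi (x,u,p) - p * a1 (x,u,p)"
    and "pu3 psi (x,u,p) = chi (x,u,p) * pu3 phi (x,u,p) + a1 (x,u,p)"
    and "pp3 psi (x,u,p) = chi (x,u,p) * pp3 phi (x,u,p)"
proof -
  obtain lam :: "R3 \<Rightarrow> real" where "\<forall>x u p. (x,u,p) \<in> V \<longrightarrow>
      px3 psi (x,u,p) - chi (x,u,p) * px3 phi (x,u,p) = - p * lam (x,u,p) \<and>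
      pu3 psi (x,u,p) - chi (x,u,p) * pu3 phi (x,u,p) = lam (x,u,p) \<and>
      pp3 psi (x,u,p) - chi (x,u,p) * pp3 phi (x,u,p) = 0"
    using contact unfolding contact_transformation_def by blast
  then show "px3 psi (x,u,p) = chi (x,u,p) * px3 phi (x,u,p) - p * a1 (x,u,p)"
    "pu3 psi (x,u,p) = chi (x,u,p) * pu3 phi (x,u,p) + a1 (x,u,p)"
    "pp3 psi (x,u,p) = chi (x,u,p) * pp3 phi (x,u,p)"
    using assms unfolding a1_def by (auto simp: algebra_simps)
qed

text \<open>If \<open>a1\<close> vanished, the gradient of \<open>\<psi>\<close> would be \<open>\<chi>\<close> times that of \<open>\<phi>\<close>,
  and the Jacobian would vanish.\<close>

lemma a1_nonzero: "z \<in> V \<Longrightarrow> a1 z \<noteq> 0"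
proof
  assume "z \<in> V" "a1 z = 0"
  moreover obtain x u p where z: "z = (x,u,p)" by (cases z)
  ultimately have "px3 psi z = chi z * px3 phi z" "pu3 psi z = chi z * pu3 phi z"
    "pp3 psi z = chi z * pp3 phi z"
    using contact_equations[of x u p] by auto
  then show False
    using contact \<open>z \<in> V\<close> unfolding contact_transformation_def by (auto simp: algebra_simps)
qed

lemma smooth_a1: "smooth_on V a1"
proof -
  have "smooth_on V (\<lambda>z. dir_deriv (0, 1, 0) psi z - chi z * dir_deriv (0, 1, 0) phi z)"
    using open_V smooth_psi smooth_phi smooth_chi R3_Basis
    by (intro smooth_on_diff smooth_on_mult smooth_on_dir_deriv) auto
  then show ?thesis by (simp add: a1_def[abs_def] pu3_eq_dir_deriv)
qed

lemma lift3_in_W: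
  assumes "\<And>y. y \<in> V \<Longrightarrow> P (g y)" "z \<in> W"
  shows "P (lift3 g z)"
proof -
  obtain x u p q where z: "z = (x,u,p,q)" by (cases z)
  then have "(x,u,p) \<in> V" using W_V assms(2) by blast
  then show ?thesis using assms(1) z by simp
qed

lemma smooth_on_W_lift3: "smooth_on V g \<Longrightarrow> smooth_on W (lift3 g)"
  by (rule smooth_on_lift3[OF open_W W_V])

abbreviation D where "D \<equiv> Dhat f"
abbreviation H where "H \<equiv> \<lambda>z. deriv abar (phi z) / (abar (phi z))^2"
abbreviation b where "b \<equiv> \<lambda>z. abar (phi z)"
abbreviation fbar where "fbar \<equiv> \<lambda>z. (abar (phi z))^3 * psi z"

abbreviation Phi where "Phi \<equiv> lift3 phi"
abbreviation Psi where "Psi \<equiv> lift3 psi"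
abbreviation Chi where "Chi \<equiv> lift3 chi"
abbreviation Lam where "Lam \<equiv> lift3 a1"
abbreviation Phi_u where "Phi_u \<equiv> lift3 (pu3 phi)"
abbreviation Phi_p where "Phi_p \<equiv> lift3 (pp3 phi)"
abbreviation B where "B \<equiv> lift3 b"
abbreviation B1 where "B1 \<equiv> lift3 (\<lambda>z. deriv abar (phi z))"
abbreviation B2 where "B2 \<equiv> lift3 (\<lambda>z. deriv (deriv abar) (phi z))"

definition Eta :: "R4 \<Rightarrow> real" where "Eta z = D Chi z / D Phi z"

lemma smooth_D: "smooth_on W g \<Longrightarrow> smooth_on W (D g)"
  by (rule smooth_on_Dhat[OF open_W smooth_f])

lemma smooth_lifted:
  "smooth_on W Phi" "smooth_on W Psi" "smooth_on W Chi" "smooth_on W Lam"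
  "smooth_on W Phi_u" "smooth_on W Phi_p" "smooth_on W B" "smooth_on W B1" "smooth_on W B2"
proof -
  have phi_T': "\<forall>z\<in>V. phi z \<in> T" using phi_T by auto
  have "smooth_on V b" "smooth_on V (\<lambda>z. deriv abar (phi z))"
    "smooth_on V (\<lambda>z. deriv (deriv abar) (phi z))"
    using smooth_on_compose[OF open_V open_T _ smooth_phi phi_T'] smooth_abar
      smooth_on_deriv[OF open_T] by blast+
  moreover have "smooth_on V (pu3 phi)" "smooth_on V (pp3 phi)"
    unfolding pu3_eq_dir_deriv pp3_eq_dir_deriv
    using smooth_on_dir_deriv[OF open_V smooth_phi] R3_Basis by auto
  ultimately show "smooth_on W Phi" "smooth_on W Psi" "smooth_on W Chi" "smooth_on W Lam"
    "smooth_on W Phi_u" "smooth_on W Phi_p" "smooth_on W B" "smooth_on W B1" "smooth_on W B2"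
    using smooth_on_W_lift3 smooth_phi smooth_psi smooth_chi smooth_a1 by auto
qed

lemma nonzero:
  assumes "z \<in> W"
  shows "Lam z \<noteq> 0" and "D Phi z \<noteq> 0" and "B z \<noteq> 0"
  using lift3_in_W[where P = "\<lambda>t. t \<noteq> 0", OF a1_nonzero assms]
    lift3_in_W[where P = "\<lambda>t. t \<noteq> 0", OF abar_phi_nonzero[rule_format] assms]
    linearizes assms unfolding equivalent_to_linear_def by auto

lemma D_Chi_eq: "z \<in> W \<Longrightarrow> D Chi z = Eta z * D Phi z"
  using nonzero(2) by (simp add: Eta_def)

lemma D_Eta: "z \<in> W \<Longrightarrow> D Eta z = B z ^ 3 * Psi z * D Phi z"
  using linearizes nonzero(2)[of z]
  unfolding equivalent_to_linear_def Let_def Eta_def[abs_def]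
  by (auto simp: field_simps lift3_apply)

lemma smooth_Eta: "smooth_on W Eta"
  using smooth_on_divide[OF open_W smooth_D smooth_D] smooth_lifted nonzero(2)
  by (simp add: Eta_def[abs_def])

lemma differentiable_at_W:
  assumes "z \<in> W"
  shows "f differentiable (at z)" "Phi differentiable (at z)" "Psi differentiable (at z)"
    "Chi differentiable (at z)" "Lam differentiable (at z)" "Phi_p differentiable (at z)"
    "Phi_u differentiable (at z)" "B differentiable (at z)" "B1 differentiable (at z)"
    "B2 differentiable (at z)" "Eta differentiable (at z)"
    "D Phi differentiable (at z)" "D (D Phi) differentiable (at z)" "D (D (D Phi)) differentiable (at z)"
    "D Chi differentiable (at z)" "D Lam differentiable (at z)" "D (D Lam) differentiable (at z)"
    "D (D (D Lam)) differentiable (at z)" "D Phi_p differentiable (at z)" "D Phi_u differentiable (at z)"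
  using smooth_on_imp_differentiable[OF _ assms] smooth_f smooth_lifted smooth_Eta smooth_D
  by blast+

lemma dir_deriv_Phi: "dir_deriv e_u Phi = Phi_u" "dir_deriv e_p Phi = Phi_p"
  by (simp_all add: fun_eq_iff pu4_eq_dir_deriv[symmetric] pp4_eq_dir_deriv[symmetric]
      pu4_lift3 pp4_lift3)

lemma dir_deriv_Psi:
  assumes "z \<in> W"
  shows "dir_deriv e_x Psi z = Chi z * dir_deriv e_x Phi z - p_coord z * Lam z"
    and "dir_deriv e_u Psi z = Chi z * Phi_u z + Lam z"
    and "dir_deriv e_p Psi z = Chi z * Phi_p z"
proof -
  obtain x u p q where z: "z = (x,u,p,q)" "(x,u,p) \<in> V" using W_V assms by (cases z) auto
  show "dir_deriv e_x Psi z = Chi z * dir_deriv e_x Phi z - p_coord z * Lam z"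
    "dir_deriv e_u Psi z = Chi z * Phi_u z + Lam z" "dir_deriv e_p Psi z = Chi z * Phi_p z"
    using contact_equations[OF z(2)]
    unfolding px4_eq_dir_deriv[symmetric] pu4_eq_dir_deriv[symmetric] pp4_eq_dir_deriv[symmetric]
    by (simp_all add: z px4_lift3 pu4_lift3 pp4_lift3 p_coord_def)
qed

lemma B_eq: "B = (\<lambda>z. abar (Phi z))" and B1_eq: "B1 = (\<lambda>z. deriv abar (Phi z))"
  and B2_eq: "B2 = (\<lambda>z. deriv (deriv abar) (Phi z))"
  by (simp_all add: fun_eq_iff lift3_apply)

lemma lift3_H: "lift3 H = (\<lambda>z. B1 z / B z ^ 2)"
  and lift3_fbar: "lift3 fbar = (\<lambda>z. B z ^ 3 * Psi z)"
  by (simp_all add: fun_eq_iff lift3_apply)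

end

context linearizing_contact_transformation
begin

lemma D_Phi_partials:
  assumes z: "z \<in> W"
  shows "dir_deriv e_q (D Phi) z = Phi_p z"
    and "dir_deriv e_p (D Phi) z = D Phi_p z + Phi_u z"
    and "dir_deriv e_u (D Phi) z = D Phi_u z"
  using dir_deriv_Dhat_lift3[OF open_W smooth_f smooth_lifted(1) z] by (simp_all add: dir_deriv_Phi)

lemma Phi_p_u_commute: "z \<in> W \<Longrightarrow> dir_deriv e_u Phi_p z = dir_deriv e_p Phi_u z"
  using dir_deriv_commute[OF open_W smooth_lifted(1) _ R4_Basis(3) R4_Basis(2)]
  by (simp add: dir_deriv_Phi)

lemma D_Phi_expand: "D Phi z = dir_deriv e_x Phi z + p_coord z * Phi_u z + q_coord z * Phi_p z"
  by (simp add: Dhat_eq_dir_deriv dir_deriv_Phi)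

lemma D_Chi_expand:
  "D Chi z = dir_deriv e_x Chi z + p_coord z * dir_deriv e_u Chi z + q_coord z * dir_deriv e_p Chi z"
  by (simp add: Dhat_eq_dir_deriv)

lemma D_Psi: "z \<in> W \<Longrightarrow> D Psi z = Chi z * D Phi z"
  by (simp add: Dhat_eq_dir_deriv dir_deriv_Psi dir_deriv_Phi algebra_simps)

text \<open>The two integrability conditions \<open>\<psi>\<^sub>u\<^sub>p = \<psi>\<^sub>p\<^sub>u\<close> and \<open>\<psi>\<^sub>x\<^sub>p = \<psi>\<^sub>p\<^sub>x\<close>
  of the contact equations.\<close>

lemma Chi_Lam_up:
  assumes z: "z \<in> W"
  shows "dir_deriv e_p Chi z * Phi_u z + dir_deriv e_p Lam z = dir_deriv e_u Chi z * Phi_p z"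
proof -
  have "dir_deriv e_p (dir_deriv e_u Psi) z = dir_deriv e_p (\<lambda>y. Chi y * Phi_u y + Lam y) z"
    by (rule dir_deriv_cong[OF open_W z]) (use dir_deriv_Psi(2) in auto)
  also have "\<dots> = Chi z * dir_deriv e_p Phi_u z + dir_deriv e_p Chi z * Phi_u z + dir_deriv e_p Lam z"
    using differentiable_at_W[OF z] by (simp add: dir_deriv_add dir_deriv_mult)
  finally have up: "dir_deriv e_p (dir_deriv e_u Psi) z
      = Chi z * dir_deriv e_p Phi_u z + dir_deriv e_p Chi z * Phi_u z + dir_deriv e_p Lam z" .
  have "dir_deriv e_u (dir_deriv e_p Psi) z = dir_deriv e_u (\<lambda>y. Chi y * Phi_p y) z"
    by (rule dir_deriv_cong[OF open_W z]) (use dir_deriv_Psi(3) in auto)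
  also have "\<dots> = Chi z * dir_deriv e_u Phi_p z + dir_deriv e_u Chi z * Phi_p z"
    using differentiable_at_W[OF z] by (simp add: dir_deriv_mult)
  finally have pu: "dir_deriv e_u (dir_deriv e_p Psi) z = Chi z * dir_deriv e_u Phi_p z + dir_deriv e_u Chi z * Phi_p z" .
  show ?thesis
    using dir_deriv_commute[OF open_W smooth_lifted(2) z R4_Basis(2) R4_Basis(3)] up pu
      Phi_p_u_commute[OF z]
    by simp
qed

lemma Chi_Lam_xp:
  assumes z: "z \<in> W"
  shows "dir_deriv e_p Chi z * dir_deriv e_x Phi z - p_coord z * dir_deriv e_p Lam z - Lam z
    = dir_deriv e_x Chi z * Phi_p z"
proof -
  have Phi_x: "dir_deriv e_x Phi differentiable (at z)"
    using smooth_on_imp_differentiable[OF smooth_on_dir_deriv[OF open_W smooth_lifted(1) R4_Basis(1)] z] .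
  have "dir_deriv e_p (dir_deriv e_x Psi) z
      = dir_deriv e_p (\<lambda>y. Chi y * dir_deriv e_x Phi y - p_coord y * Lam y) z"
    by (rule dir_deriv_cong[OF open_W z]) (use dir_deriv_Psi(1) in auto)
  also have "\<dots> = Chi z * dir_deriv e_p (dir_deriv e_x Phi) z + dir_deriv e_p Chi z * dir_deriv e_x Phi z
      - (p_coord z * dir_deriv e_p Lam z + Lam z)"
    using differentiable_at_W[OF z] Phi_x by (simp add: dir_deriv_diff dir_deriv_mult)
  finally have xp: "dir_deriv e_p (dir_deriv e_x Psi) z = Chi z * dir_deriv e_p (dir_deriv e_x Phi) z
      + dir_deriv e_p Chi z * dir_deriv e_x Phi z - (p_coord z * dir_deriv e_p Lam z + Lam z)" .
  have "dir_deriv e_x (dir_deriv e_p Psi) z = dir_deriv e_x (\<lambda>y. Chi y * Phi_p y) z"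
    by (rule dir_deriv_cong[OF open_W z]) (use dir_deriv_Psi(3) in auto)
  also have "\<dots> = Chi z * dir_deriv e_x Phi_p z + dir_deriv e_x Chi z * Phi_p z"
    using differentiable_at_W[OF z] by (simp add: dir_deriv_mult)
  finally have px: "dir_deriv e_x (dir_deriv e_p Psi) z = Chi z * dir_deriv e_x Phi_p z + dir_deriv e_x Chi z * Phi_p z" .
  have "dir_deriv e_p (dir_deriv e_x Phi) z = dir_deriv e_x Phi_p z"
    using dir_deriv_commute[OF open_W smooth_lifted(1) z R4_Basis(1) R4_Basis(3)] by (simp add: dir_deriv_Phi)
  then show ?thesis
    using dir_deriv_commute[OF open_W smooth_lifted(2) z R4_Basis(1) R4_Basis(3)] xp px by simp
qed

lemma Chi_p_eq:
  assumes z: "z \<in> W"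
  shows "dir_deriv e_p Chi z * D Phi z - Phi_p z * D Chi z = Lam z"
  using Chi_Lam_up[OF z] Chi_Lam_xp[OF z] unfolding D_Phi_expand D_Chi_expand by algebra

lemma Chi_u_eq:
  assumes z: "z \<in> W"
  shows "dir_deriv e_u Chi z * D Phi z = D Chi z * Phi_u z + D Lam z"
proof -
  have "dir_deriv e_u (D Psi) z = dir_deriv e_u (\<lambda>y. Chi y * D Phi y) z"
    by (rule dir_deriv_cong[OF open_W z]) (use D_Psi in auto)
  also have "\<dots> = Chi z * D Phi_u z + dir_deriv e_u Chi z * D Phi z"
    using differentiable_at_W[OF z] by (simp add: dir_deriv_mult D_Phi_partials(3)[OF z])
  finally have 1: "dir_deriv e_u (D Psi) z = Chi z * D Phi_u z + dir_deriv e_u Chi z * D Phi z" .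
  have "D (dir_deriv e_u Psi) z = D (\<lambda>y. Chi y * Phi_u y + Lam y) z"
    by (rule Dhat_cong[OF open_W z]) (use dir_deriv_Psi(2) in auto)
  also have "\<dots> = Chi z * D Phi_u z + D Chi z * Phi_u z + D Lam z"
    using differentiable_at_W[OF z] by (simp add: Dhat_add Dhat_mult)
  finally have 2: "D (dir_deriv e_u Psi) z = Chi z * D Phi_u z + D Chi z * Phi_u z + D Lam z" .
  show ?thesis using dir_deriv_Dhat_lift3(3)[OF open_W smooth_f smooth_lifted(2) z] 1 2 by simp
qed

lemma Lam_p_eq:
  assumes z: "z \<in> W"
  shows "dir_deriv e_p Lam z * D Phi z = D Lam z * Phi_p z - Lam z * Phi_u z"
  using Chi_Lam_up[OF z] Chi_u_eq[OF z] Chi_p_eq[OF z] by algebra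

lemma Eta_q: assumes z: "z \<in> W" shows "dir_deriv e_q Eta z = Lam z / D Phi z ^ 2"
proof -
  have "dir_deriv e_q Eta z = dir_deriv e_q (\<lambda>y. D Chi y / D Phi y) z"
    by (simp add: Eta_def[abs_def])
  also have "\<dots> = (dir_deriv e_q (D Chi) z * D Phi z - D Chi z * dir_deriv e_q (D Phi) z) / D Phi z ^ 2"
    by (rule dir_deriv_divide) (use differentiable_at_W[OF z] nonzero[OF z] in auto)
  also have "\<dots> = Lam z / D Phi z ^ 2"
    using dir_deriv_Dhat_lift3(1)[OF open_W smooth_f smooth_lifted(3) z] D_Phi_partials(1)[OF z]
      Chi_p_eq[OF z]
    by (simp add: algebra_simps)
  finally show ?thesis .
qed

lemma Chi_p_Eta: "z \<in> W \<Longrightarrow> dir_deriv e_p Chi z = Phi_p z * Eta z + Lam z / D Phi z"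
  using Chi_p_eq nonzero(2) by (simp add: Eta_def field_simps)

lemma Chi_u_Eta: "z \<in> W \<Longrightarrow> dir_deriv e_u Chi z = Eta z * Phi_u z + D Lam z / D Phi z"
  using Chi_u_eq nonzero(2) by (simp add: Eta_def field_simps)

lemma Eta_p:
  assumes z: "z \<in> W"
  shows "dir_deriv e_p Eta z
    = Phi_p z * (B z ^ 3 * Psi z) + 2 * D Lam z / D Phi z ^ 2 - Lam z * D (D Phi) z / D Phi z ^ 3"
proof -
  have "dir_deriv e_p (D Chi) z = dir_deriv e_p (\<lambda>y. Eta y * D Phi y) z"
    by (rule dir_deriv_cong[OF open_W z]) (use D_Chi_eq in auto)
  also have "\<dots> = Eta z * (D Phi_p z + Phi_u z) + dir_deriv e_p Eta z * D Phi z"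
    using differentiable_at_W[OF z] by (simp add: dir_deriv_mult D_Phi_partials(2)[OF z])
  finally have 1: "dir_deriv e_p (D Chi) z = Eta z * (D Phi_p z + Phi_u z) + dir_deriv e_p Eta z * D Phi z" .
  have "D (dir_deriv e_p Chi) z = D (\<lambda>y. Phi_p y * Eta y + Lam y / D Phi y) z"
    by (rule Dhat_cong[OF open_W z]) (use Chi_p_Eta in auto)
  also have "\<dots> = Phi_p z * D Eta z + D Phi_p z * Eta z + (D Lam z * D Phi z - Lam z * D (D Phi) z) / D Phi z ^ 2"
    using differentiable_at_W[OF z] nonzero[OF z] by (simp add: Dhat_add Dhat_mult Dhat_divide)
  finally have 2: "D (dir_deriv e_p Chi) z
      = Phi_p z * D Eta z + D Phi_p z * Eta z + (D Lam z * D Phi z - Lam z * D (D Phi) z) / D Phi z ^ 2" .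
  have 3: "dir_deriv e_p (D Chi) z = D (dir_deriv e_p Chi) z + dir_deriv e_u Chi z"
    by (rule dir_deriv_Dhat_lift3(2)[OF open_W smooth_f smooth_lifted(3) z])
  show ?thesis
    using 1 2 3 Chi_u_Eta[OF z] D_Eta[OF z] nonzero[OF z]
    by (simp add: field_simps power2_eq_square power3_eq_cube)
qed

lemma Eta_u:
  assumes z: "z \<in> W"
  shows "dir_deriv e_u Eta z
    = B z ^ 3 * Psi z * Phi_u z + D (D Lam) z / D Phi z ^ 2 - D Lam z * D (D Phi) z / D Phi z ^ 3"
proof -
  have "dir_deriv e_u (D Chi) z = dir_deriv e_u (\<lambda>y. Eta y * D Phi y) z"
    by (rule dir_deriv_cong[OF open_W z]) (use D_Chi_eq in auto)
  also have "\<dots> = Eta z * D Phi_u z + dir_deriv e_u Eta z * D Phi z"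
    using differentiable_at_W[OF z] by (simp add: dir_deriv_mult D_Phi_partials(3)[OF z])
  finally have 1: "dir_deriv e_u (D Chi) z = Eta z * D Phi_u z + dir_deriv e_u Eta z * D Phi z" .
  have "D (dir_deriv e_u Chi) z = D (\<lambda>y. Eta y * Phi_u y + D Lam y / D Phi y) z"
    by (rule Dhat_cong[OF open_W z]) (use Chi_u_Eta in auto)
  also have "\<dots> = Eta z * D Phi_u z + D Eta z * Phi_u z
      + (D (D Lam) z * D Phi z - D Lam z * D (D Phi) z) / D Phi z ^ 2"
    using differentiable_at_W[OF z] nonzero[OF z] by (simp add: Dhat_add Dhat_mult Dhat_divide)
  finally have 2: "D (dir_deriv e_u Chi) z = Eta z * D Phi_u z + D Eta z * Phi_u z
      + (D (D Lam) z * D Phi z - D Lam z * D (D Phi) z) / D Phi z ^ 2" .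
  have 3: "dir_deriv e_u (D Chi) z = D (dir_deriv e_u Chi) z"
    by (rule dir_deriv_Dhat_lift3(3)[OF open_W smooth_f smooth_lifted(3) z])
  show ?thesis
    using 1 2 3 D_Eta[OF z] nonzero[OF z] by (simp add: field_simps power2_eq_square power3_eq_cube)
qed

end

context linearizing_contact_transformation
begin

lemma abar_differentiable:
  assumes "z \<in> W"
  shows "abar differentiable (at (Phi z))" and "deriv abar differentiable (at (Phi z))"
proof -
  have "Phi z \<in> T" using lift3_in_W[where P = "\<lambda>t. t \<in> T", OF _ assms] phi_T by auto
  then show "abar differentiable (at (Phi z))" "deriv abar differentiable (at (Phi z))"
    using smooth_on_imp_differentiable smooth_abar smooth_on_deriv[OF open_T smooth_abar] by auto
qed

lemma dir_deriv_B: "z \<in> W \<Longrightarrow> dir_deriv v B z = B1 z * dir_deriv v Phi z"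
  unfolding B_eq B1_eq
  by (rule dir_deriv_compose[OF differentiable_at_W(2) abar_differentiable(1)])

lemma dir_deriv_B1: "z \<in> W \<Longrightarrow> dir_deriv v B1 z = B2 z * dir_deriv v Phi z"
  unfolding B1_eq B2_eq
  by (rule dir_deriv_compose[OF differentiable_at_W(2) abar_differentiable(2)])

lemma D_B: "z \<in> W \<Longrightarrow> D B z = B1 z * D Phi z"
  unfolding B_eq B1_eq by (rule Dhat_compose[OF differentiable_at_W(2) abar_differentiable(1)])

lemma D_B1: "z \<in> W \<Longrightarrow> D B1 z = B2 z * D Phi z"
  unfolding B1_eq B2_eq by (rule Dhat_compose[OF differentiable_at_W(2) abar_differentiable(2)])

text \<open>Differentiating the linearization condition \<open>D Eta = B\<^sup>3 Psi D Phi\<close> with respect to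
  \<open>q\<close>, \<open>p\<close> and \<open>u\<close> and commuting the partial derivatives past \<open>D\<close> brings in
  \<open>f\<^sub>q\<close>, \<open>f\<^sub>p\<close> and \<open>f\<^sub>u\<close> respectively, each multiplied by \<open>Eta\<^sub>q = Lam / (D Phi)\<^sup>2 \<noteq> 0\<close>.\<close>

lemma f_partial_eq:
  assumes z: "z \<in> W"
    and "dir_deriv v (D Eta) z = D (dir_deriv v Eta) z + R + dir_deriv v f z * dir_deriv e_q Eta z"
  shows "dir_deriv v f z = (dir_deriv v (D Eta) z - D (dir_deriv v Eta) z - R) * D Phi z ^ 2 / Lam z"
  using assms(2) Eta_q[OF z] nonzero[OF z] by (simp add: field_simps)

lemma f_q:
  assumes z: "z \<in> W"
  shows "dir_deriv e_q f z = 3 * D (D Phi) z / D Phi z - 3 * D Lam z / Lam z"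
proof -
  have 1: "dir_deriv e_q (D Eta) z = B z ^ 3 * Psi z * Phi_p z"
  proof -
    have "dir_deriv e_q (D Eta) z = dir_deriv e_q (\<lambda>y. B y ^ 3 * Psi y * D Phi y) z"
      by (rule dir_deriv_cong[OF open_W z]) (use D_Eta in auto)
    then show ?thesis
      using differentiable_at_W[OF z]
      by (simp add: dir_deriv_mult dir_deriv_power D_Phi_partials(1)[OF z])
  qed
  have 2: "D (dir_deriv e_q Eta) z
      = (D Lam z * D Phi z ^ 2 - Lam z * (2 * D Phi z * D (D Phi) z)) / (D Phi z ^ 2) ^ 2"
  proof -
    have "D (dir_deriv e_q Eta) z = D (\<lambda>y. Lam y / D Phi y ^ 2) z"
      by (rule Dhat_cong[OF open_W z]) (use Eta_q in auto)
    then show ?thesis using differentiable_at_W[OF z] nonzero[OF z] by (simp add: Dhat_divide Dhat_power)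
  qed
  have "dir_deriv e_q f z
      = (dir_deriv e_q (D Eta) z - D (dir_deriv e_q Eta) z - dir_deriv e_p Eta z) * D Phi z ^ 2 / Lam z"
    by (rule f_partial_eq[OF z dir_deriv_q_Dhat[OF open_W smooth_f smooth_Eta z]])
  then show ?thesis
    unfolding 1 2 Eta_p[OF z] using nonzero[OF z]
    by (simp add: field_simps power2_eq_square power3_eq_cube) algebra
qed

lemma f_p:
  assumes z: "z \<in> W"
  shows "dir_deriv e_p f z = - 3 * D (D Lam) z / Lam z + 6 * D Lam z * D (D Phi) z / (Lam z * D Phi z)
    + D (D (D Phi)) z / D Phi z - 3 * D (D Phi) z ^ 2 / D Phi z ^ 2"
proof -
  have 1: "dir_deriv e_p (D Eta) z = B z ^ 3 * Psi z * (D Phi_p z + Phi_u z)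
      + (B z ^ 3 * (Chi z * Phi_p z) + 3 * B z ^ 2 * (B1 z * Phi_p z) * Psi z) * D Phi z"
  proof -
    have "dir_deriv e_p (D Eta) z = dir_deriv e_p (\<lambda>y. B y ^ 3 * Psi y * D Phi y) z"
      by (rule dir_deriv_cong[OF open_W z]) (use D_Eta in auto)
    then show ?thesis
      using differentiable_at_W[OF z] dir_deriv_Psi(3)[OF z]
      by (simp add: dir_deriv_mult dir_deriv_power D_Phi_partials(2)[OF z] dir_deriv_B[OF z]
          dir_deriv_Phi algebra_simps)
  qed
  have 2: "D (dir_deriv e_p Eta) z
      = Phi_p z * (B z ^ 3 * (Chi z * D Phi z) + 3 * B z ^ 2 * (B1 z * D Phi z) * Psi z)
        + D Phi_p z * (B z ^ 3 * Psi z)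
        + 2 * (D (D Lam) z * D Phi z ^ 2 - D Lam z * (2 * D Phi z * D (D Phi) z)) / (D Phi z ^ 2) ^ 2
        - ((Lam z * D (D (D Phi)) z + D Lam z * D (D Phi) z) * D Phi z ^ 3
           - Lam z * D (D Phi) z * (3 * D Phi z ^ 2 * D (D Phi) z)) / (D Phi z ^ 3) ^ 2"
  proof -
    have "D (dir_deriv e_p Eta) z = D (\<lambda>y. Phi_p y * (B y ^ 3 * Psi y) + 2 * D Lam y / D Phi y ^ 2
        - Lam y * D (D Phi) y / D Phi y ^ 3) z"
      by (rule Dhat_cong[OF open_W z]) (use Eta_p in auto)
    then show ?thesis
      using differentiable_at_W[OF z] nonzero[OF z]
      by (simp add: Dhat_simps D_B[OF z] D_Psi[OF z] algebra_simps)
  qed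
  have "dir_deriv e_p f z
      = (dir_deriv e_p (D Eta) z - D (dir_deriv e_p Eta) z - dir_deriv e_u Eta z) * D Phi z ^ 2 / Lam z"
    by (rule f_partial_eq[OF z dir_deriv_p_Dhat[OF open_W smooth_f smooth_Eta z]])
  then show ?thesis
    unfolding 1 2 Eta_u[OF z] by (simp only: f_p_identity[OF nonzero(1,2)[OF z]])
qed

lemma f_u:
  assumes z: "z \<in> W"
  shows "dir_deriv e_u f z = B z ^ 3 * D Phi z ^ 3 - D (D (D Lam)) z / Lam z
    + 3 * D (D Lam) z * D (D Phi) z / (Lam z * D Phi z) + D Lam z * D (D (D Phi)) z / (Lam z * D Phi z)
    - 3 * D Lam z * D (D Phi) z ^ 2 / (Lam z * D Phi z ^ 2)"
proof -
  have 1: "dir_deriv e_u (D Eta) z = B z ^ 3 * Psi z * D Phi_u z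
      + (B z ^ 3 * (Chi z * Phi_u z + Lam z) + 3 * B z ^ 2 * (B1 z * Phi_u z) * Psi z) * D Phi z"
  proof -
    have "dir_deriv e_u (D Eta) z = dir_deriv e_u (\<lambda>y. B y ^ 3 * Psi y * D Phi y) z"
      by (rule dir_deriv_cong[OF open_W z]) (use D_Eta in auto)
    then show ?thesis
      using differentiable_at_W[OF z] dir_deriv_Psi(2)[OF z]
      by (simp add: dir_deriv_mult dir_deriv_power D_Phi_partials(3)[OF z] dir_deriv_B[OF z]
          dir_deriv_Phi algebra_simps)
  qed
  have 2: "D (dir_deriv e_u Eta) z
      = Phi_u z * (B z ^ 3 * (Chi z * D Phi z) + 3 * B z ^ 2 * (B1 z * D Phi z) * Psi z)
        + D Phi_u z * (B z ^ 3 * Psi z)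
        + (D (D (D Lam)) z * D Phi z ^ 2 - D (D Lam) z * (2 * D Phi z * D (D Phi) z)) / (D Phi z ^ 2) ^ 2
        - ((D Lam z * D (D (D Phi)) z + D (D Lam) z * D (D Phi) z) * D Phi z ^ 3
           - D Lam z * D (D Phi) z * (3 * D Phi z ^ 2 * D (D Phi) z)) / (D Phi z ^ 3) ^ 2"
  proof -
    have "D (dir_deriv e_u Eta) z = D (\<lambda>y. B y ^ 3 * Psi y * Phi_u y + D (D Lam) y / D Phi y ^ 2
        - D Lam y * D (D Phi) y / D Phi y ^ 3) z"
      by (rule Dhat_cong[OF open_W z]) (use Eta_u in auto)
    then show ?thesis
      using differentiable_at_W[OF z] nonzero[OF z]
      by (simp add: Dhat_simps D_B[OF z] D_Psi[OF z] algebra_simps)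
  qed
  have "dir_deriv e_u f z = (dir_deriv e_u (D Eta) z - D (dir_deriv e_u Eta) z - 0) * D Phi z ^ 2 / Lam z"
    by (rule f_partial_eq[OF z]) (simp add: dir_deriv_u_Dhat[OF open_W smooth_f smooth_Eta z])
  then show ?thesis unfolding 1 2 diff_zero by (simp only: f_u_identity[OF nonzero(1,2)[OF z]])
qed

end

context linearizing_contact_transformation
begin

lemma I1_eq: "z \<in> W \<Longrightarrow> I1 f z = 3 * D Lam z / Lam z - 3 * D (D Phi) z / D Phi z"
  by (simp add: I1_def pq4_eq_dir_deriv f_q)

lemma D_I1:
  assumes z: "z \<in> W"
  shows "D (I1 f) z = 3 * ((D (D Lam) z * Lam z - D Lam z * D Lam z) / Lam z ^ 2)
    - 3 * ((D (D (D Phi)) z * D Phi z - D (D Phi) z * D (D Phi) z) / D Phi z ^ 2)"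
proof -
  have "D (I1 f) z = D (\<lambda>y. 3 * D Lam y / Lam y - 3 * D (D Phi) y / D Phi y) z"
    by (rule Dhat_cong[OF open_W z]) (use I1_eq in auto)
  then show ?thesis
    using differentiable_at_W[OF z] nonzero[OF z] by (simp add: Dhat_simps) (simp add: field_simps)
qed

lemma I2_eq:
  assumes z: "z \<in> W"
  shows "I2 f z = 2 * D (D Lam) z / Lam z - (D Lam z / Lam z) ^ 2 - 2 * (D Lam z / Lam z) * (D (D Phi) z / D Phi z)"
  unfolding I2_def I1_eq[OF z] D_I1[OF z] pp4_eq_dir_deriv f_p[OF z]
  by (rule I2_identity[OF nonzero(1,2)[OF z]])

lemma D_I2:
  assumes z: "z \<in> W"
  shows "D (I2 f) z = 2 * ((D (D (D Lam)) z * Lam z - D (D Lam) z * D Lam z) / Lam z ^ 2)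
    - 2 * (D Lam z / Lam z) * ((D (D Lam) z * Lam z - D Lam z * D Lam z) / Lam z ^ 2)
    - 2 * ((D Lam z / Lam z) * ((D (D (D Phi)) z * D Phi z - D (D Phi) z * D (D Phi) z) / D Phi z ^ 2)
      + ((D (D Lam) z * Lam z - D Lam z * D Lam z) / Lam z ^ 2) * (D (D Phi) z / D Phi z))"
    (is "_ = ?rhs")
proof -
  have "D (I2 f) z = D (\<lambda>y. 2 * D (D Lam) y / Lam y - (D Lam y / Lam y) ^ 2
      - 2 * (D Lam y / Lam y) * (D (D Phi) y / D Phi y)) z"
    by (rule Dhat_cong[OF open_W z]) (use I2_eq in auto)
  also have "\<dots> = ?rhs"
    using differentiable_at_W[OF z] nonzero[OF z] by (simp add: Dhat_simps) (simp add: field_simps, algebra)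
  finally show ?thesis .
qed

lemma I3_eq: "z \<in> W \<Longrightarrow> I3 f z = - ((B z * D Phi z) ^ 3)"
  unfolding I3_def I1_eq I2_eq D_I2 pu4_eq_dir_deriv f_u by (rule I3_identity[OF nonzero(1,2)])

lemma J3_eq: "z \<in> W \<Longrightarrow> J3 f z = - (B z * D Phi z)"
  using I3_eq odd_real_root_power_cancel[of 3 "- (B z * D Phi z)"] by (simp add: J3_def)

lemma D_J3:
  assumes z: "z \<in> W"
  shows "D (J3 f) z = - (B z * D (D Phi) z + B1 z * D Phi z * D Phi z)"
proof -
  have "D (J3 f) z = D (\<lambda>y. - (B y * D Phi y)) z"
    by (rule Dhat_cong[OF open_W z]) (use J3_eq in auto)
  then show ?thesis using differentiable_at_W[OF z] by (simp add: Dhat_simps D_B[OF z] algebra_simps)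
qed

lemma dir_deriv_J3:
  assumes z: "z \<in> W"
  shows "dir_deriv v (J3 f) z = - (B z * dir_deriv v (D Phi) z + B1 z * dir_deriv v Phi z * D Phi z)"
proof -
  have "dir_deriv v (J3 f) z = dir_deriv v (\<lambda>y. - (B y * D Phi y)) z"
    by (rule dir_deriv_cong[OF open_W z]) (use J3_eq in auto)
  then show ?thesis
    using differentiable_at_W[OF z] by (simp add: dir_deriv_minus dir_deriv_mult dir_deriv_B[OF z] algebra_simps)
qed

lemma I4_eq: "z \<in> W \<Longrightarrow> I4 f z = - (B z * Phi_p z)"
  unfolding I4_def pq4_eq_dir_deriv by (simp add: dir_deriv_J3 D_Phi_partials(1))

lemma I5_eq: "z \<in> W \<Longrightarrow> I5 f z = - (B1 z / B z ^ 2) - D Lam z / (Lam z * B z * D Phi z)"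
  unfolding I5_def I1_eq J3_eq D_J3 by (rule I5_identity[OF nonzero])

lemma dir_deriv_q_I5:
  assumes z: "z \<in> W"
  shows "dir_deriv e_q (I5 f) z = - ((dir_deriv e_p Lam z * (Lam z * B z * D Phi z)
    - D Lam z * (Lam z * B z * Phi_p z)) / (Lam z * B z * D Phi z) ^ 2)"
proof -
  have "dir_deriv e_q (I5 f) z = dir_deriv e_q (\<lambda>y. - (B1 y / B y ^ 2) - D Lam y / (Lam y * B y * D Phi y)) z"
    by (rule dir_deriv_cong[OF open_W z]) (use I5_eq in auto)
  then show ?thesis
    using differentiable_at_W[OF z] nonzero[OF z]
    by (simp add: dir_deriv_diff dir_deriv_minus dir_deriv_mult dir_deriv_divide dir_deriv_power
        D_Phi_partials(1)[OF z] dir_deriv_Dhat_lift3(1)[OF open_W smooth_f smooth_lifted(4) z])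
qed

lemma I7_eq: "z \<in> W \<Longrightarrow> I7 f z = - (B z * Phi_u z)"
  unfolding I7_def pq4_eq_dir_deriv dir_deriv_q_I5 J3_eq by (rule I7_identity[OF nonzero Lam_p_eq])

lemma Lam_p: "z \<in> W \<Longrightarrow> dir_deriv e_p Lam z = (D Lam z * Phi_p z - Lam z * Phi_u z) / D Phi z"
  using Lam_p_eq nonzero(2) by (simp add: field_simps)

lemma D_Lam_p:
  assumes z: "z \<in> W"
  shows "D (dir_deriv e_p Lam) z = ((D (D Lam) z * Phi_p z + D Lam z * D Phi_p z
    - (D Lam z * Phi_u z + Lam z * D Phi_u z)) * D Phi z
    - (D Lam z * Phi_p z - Lam z * Phi_u z) * D (D Phi) z) / D Phi z ^ 2"
proof -
  have "D (dir_deriv e_p Lam) z = D (\<lambda>y. (D Lam y * Phi_p y - Lam y * Phi_u y) / D Phi y) z"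
    by (rule Dhat_cong[OF open_W z]) (use Lam_p in auto)
  then show ?thesis
    using differentiable_at_W[OF z] nonzero[OF z] by (simp add: Dhat_simps algebra_simps)
qed

lemma dir_deriv_p_I5:
  assumes z: "z \<in> W"
  shows "dir_deriv e_p (I5 f) z = - ((B2 z * Phi_p z * B z ^ 2 - B1 z * (2 * B z * (B1 z * Phi_p z))) / (B z ^ 2) ^ 2)
    - (dir_deriv e_p (D Lam) z * (Lam z * B z * D Phi z) - D Lam z * (dir_deriv e_p Lam z * B z * D Phi z
      + Lam z * (B1 z * Phi_p z) * D Phi z + Lam z * B z * (D Phi_p z + Phi_u z))) / (Lam z * B z * D Phi z) ^ 2"
proof -
  have "dir_deriv e_p (I5 f) z = dir_deriv e_p (\<lambda>y. - (B1 y / B y ^ 2) - D Lam y / (Lam y * B y * D Phi y)) z"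
    by (rule dir_deriv_cong[OF open_W z]) (use I5_eq in auto)
  then show ?thesis
    using differentiable_at_W[OF z] nonzero[OF z]
    by (simp add: dir_deriv_diff dir_deriv_minus dir_deriv_mult dir_deriv_divide dir_deriv_power
        dir_deriv_B[OF z] dir_deriv_B1[OF z] dir_deriv_Phi D_Phi_partials(2)[OF z] algebra_simps)
qed

lemma D_H: "z \<in> W \<Longrightarrow> D (lift3 H) z
    = (B2 z * D Phi z * B z ^ 2 - B1 z * (2 * B z * (B1 z * D Phi z))) / (B z ^ 2) ^ 2"
  unfolding lift3_H using differentiable_at_W nonzero
  by (simp add: Dhat_simps D_B D_B1 algebra_simps)

lemma D_I5:
  assumes z: "z \<in> W"
  shows "D (I5 f) z = - ((B2 z * D Phi z * B z ^ 2 - B1 z * (2 * B z * (B1 z * D Phi z))) / (B z ^ 2) ^ 2)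
    - (D (D Lam) z * (Lam z * B z * D Phi z) - D Lam z * (D Lam z * B z * D Phi z
      + Lam z * (B1 z * D Phi z) * D Phi z + Lam z * B z * D (D Phi) z)) / (Lam z * B z * D Phi z) ^ 2"
proof -
  have "D (I5 f) z = D (\<lambda>y. - (B1 y / B y ^ 2) - D Lam y / (Lam y * B y * D Phi y)) z"
    by (rule Dhat_cong[OF open_W z]) (use I5_eq in auto)
  then show ?thesis
    using differentiable_at_W[OF z] nonzero[OF z] by (simp add: Dhat_simps D_B[OF z] D_B1[OF z] algebra_simps)
qed

lemma Q_eq: "z \<in> W \<Longrightarrow> dir_deriv e_u Lam z = (lift3 H z * I7 f z - Qinv f z) * Lam z"
  unfolding Qinv_def lift3_H I1_eq I7_eq J3_eq pp4_eq_dir_deriv pu4_eq_dir_deriv dir_deriv_p_I5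
    dir_deriv_Dhat_lift3(2)[OF open_W smooth_f smooth_lifted(4)] D_Lam_p Lam_p
    dir_deriv_J3 D_Phi_partials(3) dir_deriv_Phi I4_eq D_I5
  by (rule Q_identity[OF nonzero])

lemma K_eq: "z \<in> W \<Longrightarrow> - (2 / J3 f z) * D (lift3 H) z + (lift3 H z)^2 = Kinv f z"
  unfolding Kinv_def I9_def J3_eq D_H D_I5 I2_eq I5_eq unfolding lift3_H
  by (rule K_identity[OF nonzero])

end

context linearizing_contact_transformation
begin

lemma D_b: "z \<in> W \<Longrightarrow> D (lift3 b) z = - J3 f z * lift3 H z * lift3 b z"
  unfolding lift3_H using nonzero[of z] by (simp add: D_B J3_eq field_simps power2_eq_square)

lemma a1_system:
  "\<forall>z\<in>W. D (lift3 a1) z = J3 f z * (lift3 H z + I5 f z) * lift3 a1 z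
     \<and> pu4 (lift3 a1) z = (lift3 H z * I7 f z - Qinv f z) * lift3 a1 z
     \<and> pp4 (lift3 a1) z = (I4 f z * (lift3 H z + I5 f z) - I7 f z / J3 f z) * lift3 a1 z
     \<and> pq4 (lift3 a1) z = 0"
proof (intro ballI conjI)
  fix z assume z: "z \<in> W"
  note nonzero = nonzero[OF z]
  show "D (lift3 a1) z = J3 f z * (lift3 H z + I5 f z) * lift3 a1 z"
    unfolding lift3_H using nonzero by (simp add: J3_eq[OF z] I5_eq[OF z] field_simps)
  show "pu4 (lift3 a1) z = (lift3 H z * I7 f z - Qinv f z) * lift3 a1 z"
    unfolding pu4_eq_dir_deriv by (rule Q_eq[OF z])
  show "pp4 (lift3 a1) z = (I4 f z * (lift3 H z + I5 f z) - I7 f z / J3 f z) * lift3 a1 z"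
    unfolding lift3_H using nonzero
    by (simp add: pp4_eq_dir_deriv Lam_p[OF z] I4_eq[OF z] I5_eq[OF z] I7_eq[OF z] J3_eq[OF z]
        field_simps)
  show "pq4 (lift3 a1) z = 0" by (simp add: pq4_eq_dir_deriv)
qed

lemma phi_system:
  "\<forall>z\<in>W. D (lift3 phi) z = - J3 f z / lift3 b z
     \<and> pu4 (lift3 phi) z = - I7 f z / lift3 b z
     \<and> pp4 (lift3 phi) z = - I4 f z / lift3 b z"
  using nonzero
  by (simp add: J3_eq I7_eq I4_eq pu4_eq_dir_deriv pp4_eq_dir_deriv dir_deriv_Phi)

lemma eta_chi_psi_system:
  "\<forall>z\<in>W. D Eta z = - J3 f z / lift3 b z * lift3 fbar z
     \<and> pu4 Eta z = ((lift3 H z + I5 f z)^2 / 2 + I2 f z / (2 * (J3 f z)^2))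
                    * (lift3 b z)^2 * lift3 a1 z - I7 f z / lift3 b z * lift3 fbar z
     \<and> pp4 Eta z = ((lift3 H z + I5 f z) / J3 f z + I1 f z / (3 * (J3 f z)^2))
                    * (lift3 b z)^2 * lift3 a1 z - I4 f z / lift3 b z * lift3 fbar z
     \<and> pq4 Eta z = (lift3 b z)^2 * lift3 a1 z / (J3 f z)^2
     \<and> D (lift3 chi) z = - J3 f z / lift3 b z * Eta z
     \<and> pu4 (lift3 chi) z = - (lift3 H z + I5 f z) * lift3 b z * lift3 a1 z - I7 f z / lift3 b z * Eta z
     \<and> pp4 (lift3 chi) z = - lift3 b z * lift3 a1 z / J3 f z - I4 f z / lift3 b z * Eta z
     \<and> I7 f z * D (lift3 psi) z = J3 f z * (pu4 (lift3 psi) z - lift3 a1 z)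
     \<and> px4 (lift3 psi) z = lift3 chi z * px4 (lift3 phi) z - fst (snd (snd z)) * lift3 a1 z
     \<and> pp4 (lift3 psi) z = - I4 f z / lift3 b z * lift3 chi z
     \<and> lift3 chi z = D (lift3 psi) z / D (lift3 phi) z"
proof (intro ballI conjI)
  fix z assume z: "z \<in> W"
  note nonzero = nonzero[OF z]
  show "D Eta z = - J3 f z / lift3 b z * lift3 fbar z"
    unfolding lift3_fbar using nonzero by (simp add: J3_eq[OF z] D_Eta[OF z] field_simps)
  show "pu4 Eta z = ((lift3 H z + I5 f z)^2 / 2 + I2 f z / (2 * (J3 f z)^2))
      * (lift3 b z)^2 * lift3 a1 z - I7 f z / lift3 b z * lift3 fbar z"
    unfolding pu4_eq_dir_deriv lift3_fbar lift3_H Eta_u[OF z] I5_eq[OF z] I2_eq[OF z] J3_eq[OF z]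
      I7_eq[OF z]
    using nonzero by (simp add: field_simps) algebra
  show "pp4 Eta z = ((lift3 H z + I5 f z) / J3 f z + I1 f z / (3 * (J3 f z)^2))
      * (lift3 b z)^2 * lift3 a1 z - I4 f z / lift3 b z * lift3 fbar z"
    unfolding pp4_eq_dir_deriv lift3_fbar lift3_H Eta_p[OF z] I5_eq[OF z] I1_eq[OF z] J3_eq[OF z]
      I4_eq[OF z]
    using nonzero by (simp add: field_simps) algebra
  show "pq4 Eta z = (lift3 b z)^2 * lift3 a1 z / (J3 f z)^2"
    using nonzero by (simp add: pq4_eq_dir_deriv Eta_q[OF z] J3_eq[OF z] field_simps)
  show "D (lift3 chi) z = - J3 f z / lift3 b z * Eta z"
    using nonzero by (simp add: D_Chi_eq[OF z] J3_eq[OF z])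
  show "pu4 (lift3 chi) z = - (lift3 H z + I5 f z) * lift3 b z * lift3 a1 z - I7 f z / lift3 b z * Eta z"
    unfolding lift3_H using nonzero
    by (simp add: pu4_eq_dir_deriv Chi_u_Eta[OF z] I5_eq[OF z] I7_eq[OF z] field_simps)
  show "pp4 (lift3 chi) z = - lift3 b z * lift3 a1 z / J3 f z - I4 f z / lift3 b z * Eta z"
    using nonzero
    by (simp add: pp4_eq_dir_deriv Chi_p_Eta[OF z] J3_eq[OF z] I4_eq[OF z] field_simps)
  show "I7 f z * D (lift3 psi) z = J3 f z * (pu4 (lift3 psi) z - lift3 a1 z)"
    by (simp add: pu4_eq_dir_deriv dir_deriv_Psi(2)[OF z] I7_eq[OF z] J3_eq[OF z] D_Psi[OF z]
        algebra_simps)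
  show "px4 (lift3 psi) z = lift3 chi z * px4 (lift3 phi) z - fst (snd (snd z)) * lift3 a1 z"
    by (simp add: px4_eq_dir_deriv dir_deriv_Psi(1)[OF z] p_coord_def)
  show "pp4 (lift3 psi) z = - I4 f z / lift3 b z * lift3 chi z"
    using nonzero by (simp add: pp4_eq_dir_deriv dir_deriv_Psi(3)[OF z] I4_eq[OF z])
  show "lift3 chi z = D (lift3 psi) z / D (lift3 phi) z"
    using nonzero by (simp add: D_Psi[OF z])
qed

end

theorem mainTheorem4:
  fixes f :: "R4 \<Rightarrow> real" and W :: "R4 set" and V :: "R3 set"
    and phi psi chi :: "R3 \<Rightarrow> real" and abar :: "real \<Rightarrow> real" and T :: "real set"
    and H b :: "R3 \<Rightarrow> real" and eta :: "R4 \<Rightarrow> real" and fbar :: "R3 \<Rightarrow> real"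
  assumes W_open: "open W"
    and f_smooth: "smooth_on W f"
    and I3_nz: "\<forall>z\<in>W. I3 f z \<noteq> 0"
    and WV: "\<forall>x u p q. (x,u,p,q) \<in> W \<longrightarrow> (x,u,p) \<in> V"
    and contact: "contact_transformation V phi psi chi"
    and T_open: "open T" and phiT: "phi ` V \<subseteq> T"
    and abar_smooth: "smooth_on T abar"
    and abar_nz: "\<forall>z\<in>V. abar (phi z) \<noteq> 0"
    and equiv: "equivalent_to_linear f W phi psi chi abar"
    and H_def: "H \<equiv> (\<lambda>z. deriv abar (phi z) / (abar (phi z))^2)"
    and b_def: "b \<equiv> (\<lambda>z. abar (phi z))"
    and eta_def: "eta \<equiv> (\<lambda>z. Dhat f (lift3 chi) z / Dhat f (lift3 phi) z)"
    and fbar_def: "fbar \<equiv> (\<lambda>z. (abar (phi z))^3 * psi z)"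
  shows
    \<comment> \<open>(1)\<close>
    "(\<forall>z\<in>W. - (2 / J3 f z) * Dhat f (lift3 H) z + (lift3 H z)^2 = Kinv f z)
     \<comment> \<open>(2)\<close>
     \<and> (\<forall>z\<in>W. Dhat f (lift3 b) z = - J3 f z * lift3 H z * lift3 b z)
     \<and> (\<exists>a1 :: R3 \<Rightarrow> real. smooth_on V a1 \<and> (\<forall>z\<in>V. a1 z \<noteq> 0) \<and>
        \<comment> \<open>(3)\<close>
        (\<forall>z\<in>W.
           Dhat f (lift3 a1) z = J3 f z * (lift3 H z + I5 f z) * lift3 a1 z
         \<and> pu4 (lift3 a1) z = (lift3 H z * I7 f z - Qinv f z) * lift3 a1 z
         \<and> pp4 (lift3 a1) z = (I4 f z * (lift3 H z + I5 f z) - I7 f z / J3 f z) * lift3 a1 z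
         \<and> pq4 (lift3 a1) z = 0) \<and>
        \<comment> \<open>(4)\<close>
        (\<forall>z\<in>W.
           Dhat f (lift3 phi) z = - J3 f z / lift3 b z
         \<and> pu4 (lift3 phi) z = - I7 f z / lift3 b z
         \<and> pp4 (lift3 phi) z = - I4 f z / lift3 b z) \<and>
        \<comment> \<open>(5)\<close>
        (\<forall>z\<in>W.
           Dhat f eta z = - J3 f z / lift3 b z * lift3 fbar z
         \<and> pu4 eta z = ((lift3 H z + I5 f z)^2 / 2 + I2 f z / (2 * (J3 f z)^2))
                        * (lift3 b z)^2 * lift3 a1 z - I7 f z / lift3 b z * lift3 fbar z
         \<and> pp4 eta z = ((lift3 H z + I5 f z) / J3 f z + I1 f z / (3 * (J3 f z)^2))
                        * (lift3 b z)^2 * lift3 a1 z - I4 f z / lift3 b z * lift3 fbar z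
         \<and> pq4 eta z = (lift3 b z)^2 * lift3 a1 z / (J3 f z)^2
         \<and> Dhat f (lift3 chi) z = - J3 f z / lift3 b z * eta z
         \<and> pu4 (lift3 chi) z = - (lift3 H z + I5 f z) * lift3 b z * lift3 a1 z
                                - I7 f z / lift3 b z * eta z
         \<and> pp4 (lift3 chi) z = - lift3 b z * lift3 a1 z / J3 f z - I4 f z / lift3 b z * eta z
         \<and> I7 f z * Dhat f (lift3 psi) z = J3 f z * (pu4 (lift3 psi) z - lift3 a1 z)
         \<and> px4 (lift3 psi) z = lift3 chi z * px4 (lift3 phi) z
                                - fst (snd (snd z)) * lift3 a1 z
         \<and> pp4 (lift3 psi) z = - I4 f z / lift3 b z * lift3 chi z
         \<and> lift3 chi z = Dhat f (lift3 psi) z / Dhat f (lift3 phi) z))"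
proof -
  interpret linearizing_contact_transformation f W V phi psi chi abar T
    using W_open f_smooth WV contact T_open phiT abar_smooth abar_nz equiv by unfold_locales
  have "eta = Eta" by (simp add: eta_def Eta_def fun_eq_iff)
  then show ?thesis
    unfolding H_def b_def fbar_def
    using K_eq D_b smooth_a1 a1_nonzero a1_system phi_system eta_chi_psi_system by blast
qed

end
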